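(* There exists a measurable function $f:S^1\to S^1$ whose Fourier coefficients satisfy $a_n=0$ for all $n\ge0$, such that $\sum_{n\in\mathbb Z}|n|^{2s'}|a_n|^2<\infty$ for every $s'<\tfrac12$, but $\sum_{n\in\mathbb Z}|n|^{2s}|a_n|^2=\infty$ for every $s\ge\tfrac12$. (Such an $f$ is obtained as $f(e^{it})=e^{-it}g(e^{-it})$ where $g$ is a Blaschke product which is not a rational function and whose Taylor coefficients are $O(1/n)$; the existence of such $g$ is a result of Newman and Shapiro.)
   Context: $S^1=\{z\in\mathbb C:|z|=1\}$; $a_n=\frac{1}{2\pi}\int_{-\pi}^{\pi}f(e^{it})e^{-int}\,dt$. One may assume the known result (Newman–Shapiro, 1962) that there exists a Blaschke product $g(z)=\sum_{n\ge0}b_nz^n$ on the unit disc which is not a rational function and satisfies $b_n=O(1/n)$ as $n\to\infty$. *)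

theory Defs
  imports "HOL-Analysis.Analysis"
begin

abbreviation circle :: "complex set" where
  "circle \<equiv> sphere 0 1"

definition fourier_coeff :: "(complex \<Rightarrow> complex) \<Rightarrow> int \<Rightarrow> complex" where
  "fourier_coeff f n =
     complex_of_real (1 / (2 * pi)) *
     (LBINT t=-pi..pi. f (exp (\<i> * complex_of_real t)) * exp (- \<i> * of_int n * complex_of_real t))"

end

theory Submission
  imports Defs
begin

(* We build, instead of quoting Newman and Shapiro, an explicit infinite Blaschke product
   g(z) = z * prod_k (a_k - z) / (1 - a_k z) with real zeros a_k = 1 - 2^-(k+1) and take
   f = conj g on the circle, so that the coefficient of f at -m is conj c_m, c_m being the
   Taylor coefficients of g.  Everything is read off from the finite products Q_N:
   - Parseval on circles of radius r <= 1 gives sum |q_m|^2 = 1 and, via the logarithmic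
     derivative z Q'/Q on |z| = 1, the degree identity sum m |q_m|^2 = N + 1;
   - integrating |Q_N'| over the circle of radius 1 - 1/(2m) gives |q_m| <= K m^(eps-1)
     uniformly in N, for every eps > 0;
   - Q_N -> g pointwise on the circle and coefficient-wise; by Tannery's theorem the
     energies converge too, so the c_m inherit these bounds, sum |c_m|^2 = 1, and Abel
     summation against the degree identity shows sum m |c_m|^2 = infinity. *)

lemma norm_exp_i_real [simp]: "norm (exp (\<i> * complex_of_real t)) = 1"
  by (simp add: norm_exp_eq_Re)

lemma norm_exp_minus_i_int [simp]: "norm (exp (- \<i> * of_int n * complex_of_real t)) = 1"
  by (simp add: norm_exp_eq_Re)

lemma exp_i_eq_1_imp_zero:
  assumes "t \<in> {-pi..pi}" "exp (\<i> * complex_of_real t) = 1"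
  shows "t = 0"
proof -
  from assms(2) obtain k :: int where k: "t = of_int (2 * k) * pi" by (auto simp: exp_eq_1)
  with assms(1) have "\<bar>real_of_int (2 * k)\<bar> * pi \<le> 1 * pi" by (simp add: abs_mult)
  then have "\<bar>real_of_int (2 * k)\<bar> \<le> 1" using pi_gt_zero by (simp only: mult_le_cancel_right)
  then have "k = 0" by linarith
  with k show ?thesis by simp
qed

lemma exp_i_int_has_integral:
  fixes k :: int
  shows "((\<lambda>t. exp (\<i> * of_int k * complex_of_real t)) has_integral
            (if k = 0 then complex_of_real (2*pi) else 0)) {-pi..pi}"
proof (cases "k = 0")
  case True
  then show ?thesis
    using has_integral_const_real[of "1::complex" "-pi" pi] by (simp add: scaleR_conv_of_real)
next
  case False
  define F where "F t = exp (\<i> * of_int k * complex_of_real t) / (\<i> * of_int k)" for t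
  have "((\<lambda>z. exp (\<i> * of_int k * z) / (\<i> * of_int k)) has_field_derivative
          exp (\<i> * of_int k * complex_of_real t)) (at (complex_of_real t))" for t
    using False by (auto intro!: derivative_eq_intros simp: field_simps)
  then have "(F has_vector_derivative exp (\<i> * of_int k * complex_of_real t)) (at t within {-pi..pi})" for t
    unfolding F_def by (rule has_vector_derivative_real_field)
  then have ftc: "((\<lambda>t. exp (\<i> * of_int k * complex_of_real t)) has_integral (F pi - F (-pi))) {-pi..pi}"
    by (intro fundamental_theorem_of_calculus) auto
  have "exp (\<i> * of_int k * complex_of_real pi) = exp (\<i> * of_int k * complex_of_real (-pi))"
    by (subst exp_eq) (auto intro!: exI[of _ k] simp: algebra_simps)
  then have "F pi - F (-pi) = 0" unfolding F_def by simp
  then show ?thesis using ftc False by simp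
qed

lemma integral_sums_termwise:
  fixes u :: "nat \<Rightarrow> 'n::euclidean_space \<Rightarrow> 'm::euclidean_space"
  assumes int: "\<And>m. (u m has_integral I m) S"
    and dom: "\<And>M x. x \<in> S \<Longrightarrow> norm (\<Sum>m<M. u m x) \<le> C"
    and C: "(\<lambda>x. C) integrable_on S"
    and conv: "\<And>x. x \<in> S \<Longrightarrow> (\<lambda>m. u m x) sums U x"
  shows "U integrable_on S" and "I sums integral S U"
proof -
  have partial: "((\<lambda>x. \<Sum>m<M. u m x) has_integral (\<Sum>m<M. I m)) S" for M
    by (intro has_integral_sum) (auto intro: int)
  note dc = dominated_convergence[OF has_integral_integrable[OF partial] C dom conv[unfolded sums_def]]
  show "U integrable_on S" by (rule dc(1))
  show "I sums integral S U" using dc(2) unfolding sums_def integral_unique[OF partial] .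
qed

lemma norm_eval_fps_le:
  fixes F :: "complex fps"
  assumes "norm z < fps_conv_radius F"
  shows "norm (eval_fps F z) \<le> (\<Sum>m. norm (fps_nth F m * z ^ m))"
  unfolding eval_fps_def by (rule summable_norm[OF norm_summable_fps[OF assms]])

lemma fps_fourier_coeff:
  fixes F :: "complex fps" and n :: int
  assumes r: "0 \<le> r" "ereal r < fps_conv_radius F"
  shows "((\<lambda>t. eval_fps F (of_real r * exp (\<i> * of_real t)) * exp (- \<i> * of_int n * of_real t))
           has_integral (if n \<ge> 0 then of_real (2*pi) * fps_nth F (nat n) * of_real r ^ nat n else 0))
         {-pi..pi}"
proof -
  define u where "u m t = fps_nth F m * of_real r ^ m * exp (\<i> * of_int (int m - n) * of_real t)" for m t
  define I where "I m = (if int m = n then of_real (2*pi) * fps_nth F m * of_real r ^ m else 0)" for m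
  have term_eq: "fps_nth F m * (of_real r * exp (\<i> * of_real t)) ^ m * exp (- \<i> * of_int n * of_real t) = u m t"
    for m t
  proof -
    have "exp (\<i> * complex_of_real t) ^ m * exp (- \<i> * of_int n * of_real t)
            = exp (\<i> * of_int (int m - n) * of_real t)"
      by (simp add: exp_of_nat_mult[symmetric] exp_add[symmetric] algebra_simps)
    then show ?thesis by (simp add: u_def power_mult_distrib)
  qed
  have int: "(u m has_integral I m) {-pi..pi}" for m
  proof -
    have "(u m has_integral (fps_nth F m * of_real r ^ m) * (if int m - n = 0 then of_real (2*pi) else 0))
            {-pi..pi}"
      unfolding u_def by (rule has_integral_mult_right[OF exp_i_int_has_integral])
    then show ?thesis by (cases "int m = n") (simp_all add: I_def mult_ac)
  qed
  have nr: "norm (complex_of_real r) < fps_conv_radius F" using r by simp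
  have dom: "norm (\<Sum>m<M. u m t) \<le> (\<Sum>m. norm (fps_nth F m * of_real r ^ m))" for M t
  proof -
    have "norm (\<Sum>m<M. u m t) \<le> (\<Sum>m<M. norm (fps_nth F m * of_real r ^ m))"
      by (rule order_trans[OF norm_sum]) (simp add: u_def norm_mult)
    also have "\<dots> \<le> (\<Sum>m. norm (fps_nth F m * of_real r ^ m))"
      by (intro sum_le_suminf norm_summable_fps[OF nr]) auto
    finally show ?thesis .
  qed
  have conv: "(\<lambda>m. u m t) sums (eval_fps F (of_real r * exp (\<i> * of_real t)) * exp (- \<i> * of_int n * of_real t))"
    for t
  proof -
    have "norm (complex_of_real r * exp (\<i> * complex_of_real t)) < fps_conv_radius F"
      using nr by (simp add: norm_mult)
    from sums_mult2[OF sums_eval_fps[OF this], of "exp (- \<i> * of_int n * of_real t)"]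
    show ?thesis by (simp only: term_eq)
  qed
  note termwise = integral_sums_termwise[OF int dom integrable_const_ivl conv]
  have "I sums (if n \<ge> 0 then of_real (2*pi) * fps_nth F (nat n) * of_real r ^ nat n else 0)"
  proof (cases "n \<ge> 0")
    case True
    then have "I = (\<lambda>m. if m = nat n then of_real (2*pi) * fps_nth F m * of_real r ^ m else 0)"
      by (intro ext) (auto simp: I_def)
    then show ?thesis
      using True sums_single[of "nat n" "\<lambda>m. of_real (2*pi) * fps_nth F m * of_real r ^ m"] by simp
  next
    case False
    then have "I = (\<lambda>m. 0)" by (intro ext) (auto simp: I_def)
    then show ?thesis using False by simp
  qed
  then have "integral {-pi..pi} (\<lambda>t. eval_fps F (of_real r * exp (\<i> * of_real t)) * exp (- \<i> * of_int n * of_real t))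
      = (if n \<ge> 0 then of_real (2*pi) * fps_nth F (nat n) * of_real r ^ nat n else 0)"
    using termwise(2) by (rule sums_unique2[symmetric])
  with integrable_integral[OF termwise(1)] show ?thesis by simp
qed

lemma fps_parseval:
  fixes F G :: "complex fps"
  assumes r: "0 \<le> r" "ereal r < fps_conv_radius F" "ereal r < fps_conv_radius G"
  defines "E \<equiv> \<lambda>t. complex_of_real r * exp (\<i> * complex_of_real t)"
  shows "(\<lambda>t. eval_fps F (E t) * cnj (eval_fps G (E t))) integrable_on {-pi..pi}"
    and "(\<lambda>m. of_real (2*pi) * fps_nth F m * cnj (fps_nth G m) * of_real r ^ (2*m)) sums
           integral {-pi..pi} (\<lambda>t. eval_fps F (E t) * cnj (eval_fps G (E t)))"
proof -
  define u where "u m t = cnj (fps_nth G m) * of_real r ^ m * (eval_fps F (E t) * exp (- \<i> * of_int (int m) * of_real t))"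
    for m t
  have nE: "norm (E t) = r" for t using r by (simp add: E_def norm_mult)
  have rF: "norm (E t) < fps_conv_radius F" and rG: "norm (E t) < fps_conv_radius G" for t
    using r by (simp_all add: nE)
  have int: "(u m has_integral of_real (2*pi) * fps_nth F m * cnj (fps_nth G m) * of_real r ^ (2*m)) {-pi..pi}" for m
  proof -
    have "(u m has_integral cnj (fps_nth G m) * of_real r ^ m * (of_real (2*pi) * fps_nth F m * of_real r ^ m)) {-pi..pi}"
      unfolding u_def E_def using has_integral_mult_right[OF fps_fourier_coeff[OF r(1,2), of "int m"]] by simp
    moreover have "(of_real r :: complex) ^ (2*m) = of_real r ^ m * of_real r ^ m"
      by (simp only: mult_2 power_add)
    ultimately show ?thesis by (simp only: mult_ac)
  qed
  have conv: "(\<lambda>m. u m t) sums (eval_fps F (E t) * cnj (eval_fps G (E t)))" for t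
  proof -
    have eq: "cnj (fps_nth G m * E t ^ m) = cnj (fps_nth G m) * of_real r ^ m * exp (- \<i> * of_int (int m) * of_real t)"
      for m
    proof -
      have "cnj (exp (\<i> * complex_of_real t)) ^ m = exp (- \<i> * of_int (int m) * of_real t)"
        by (simp add: exp_cnj exp_of_nat_mult[symmetric] algebra_simps)
      then show ?thesis by (simp add: E_def power_mult_distrib)
    qed
    have "(\<lambda>m. cnj (fps_nth G m * E t ^ m)) sums cnj (eval_fps G (E t))"
      using sums_eval_fps[OF rG] by (simp only: sums_cnj)
    then have "(\<lambda>m. cnj (fps_nth G m) * of_real r ^ m * exp (- \<i> * of_int (int m) * of_real t))
                 sums cnj (eval_fps G (E t))"
      by (simp only: eq)
    from sums_mult[OF this, of "eval_fps F (E t)"] show ?thesis by (simp add: u_def mult_ac)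
  qed
  define AF where "AF = (\<Sum>m. norm (fps_nth F m * of_real r ^ m))"
  define AG where "AG = (\<Sum>m. norm (fps_nth G m * of_real r ^ m))"
  have dom: "norm (\<Sum>m<M. u m t) \<le> AF * AG" for M t
  proof -
    have "norm (eval_fps F (E t)) \<le> AF"
      using norm_eval_fps_le[OF rF] r(1) by (simp add: AF_def norm_mult norm_power nE)
    moreover have "norm (\<Sum>m<M. cnj (fps_nth G m) * of_real r ^ m * exp (- \<i> * of_int (int m) * of_real t)) \<le> AG"
    proof -
      have "norm (complex_of_real r) < fps_conv_radius G" using r by simp
      then have "(\<Sum>m<M. norm (fps_nth G m * of_real r ^ m)) \<le> AG"
        unfolding AG_def by (intro sum_le_suminf norm_summable_fps) auto
      then show ?thesis
        by (intro order_trans[OF norm_sum]) (simp add: norm_mult)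
    qed
    moreover have "(\<Sum>m<M. u m t) = eval_fps F (E t) *
        (\<Sum>m<M. cnj (fps_nth G m) * of_real r ^ m * exp (- \<i> * of_int (int m) * of_real t))"
      by (simp add: u_def sum_distrib_left mult_ac)
    ultimately show ?thesis
      by (simp only: norm_mult) (intro mult_mono; simp add: order_trans[OF norm_ge_zero])
  qed
  note termwise = integral_sums_termwise[OF int dom integrable_const_ivl conv]
  show "(\<lambda>t. eval_fps F (E t) * cnj (eval_fps G (E t))) integrable_on {-pi..pi}" by (rule termwise(1))
  show "(\<lambda>m. of_real (2*pi) * fps_nth F m * cnj (fps_nth G m) * of_real r ^ (2*m)) sums
           integral {-pi..pi} (\<lambda>t. eval_fps F (E t) * cnj (eval_fps G (E t)))" by (rule termwise(2))
qed

lemma fps_parseval_norm: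
  fixes F :: "complex fps"
  assumes r: "0 \<le> r" "ereal r < fps_conv_radius F"
  shows "(\<lambda>m. (norm (fps_nth F m))^2 * r ^ (2*m)) sums
           (integral {-pi..pi} (\<lambda>t. (norm (eval_fps F (of_real r * exp (\<i> * of_real t))))^2) / (2*pi))"
proof -
  define \<phi> where "\<phi> = (\<lambda>t. (norm (eval_fps F (of_real r * exp (\<i> * of_real t))))^2)"
  have sq: "eval_fps F (of_real r * exp (\<i> * of_real t)) * cnj (eval_fps F (of_real r * exp (\<i> * of_real t)))
              = complex_of_real (\<phi> t)" for t
    unfolding \<phi>_def complex_norm_square ..
  note parseval = fps_parseval[OF r(1,2,2), unfolded sq]
  have "((\<lambda>t. complex_of_real (\<phi> t)) has_integral integral {-pi..pi} (\<lambda>t. complex_of_real (\<phi> t))) {-pi..pi}"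
    by (rule integrable_integral[OF parseval(1)])
  from has_integral_Re[OF this] have ire: "Re (integral {-pi..pi} (\<lambda>t. complex_of_real (\<phi> t))) = integral {-pi..pi} \<phi>"
    by (simp add: integral_unique)
  have re: "Re (of_real (2*pi) * fps_nth F m * cnj (fps_nth F m) * of_real r ^ (2*m))
                   = 2 * pi * ((norm (fps_nth F m))^2 * r ^ (2*m))" for m
  proof -
    have "Re (of_real (2*pi) * fps_nth F m * cnj (fps_nth F m) * of_real r ^ (2*m))
            = Re (of_real (2*pi) * of_real ((norm (fps_nth F m))^2) * of_real r ^ (2*m))"
      by (simp only: mult.assoc complex_norm_square)
    then show ?thesis by (simp only: of_real_mult[symmetric] of_real_power[symmetric] Re_complex_of_real mult.assoc)
  qed
  have S: "(\<lambda>m. 2 * pi * ((norm (fps_nth F m))^2 * r ^ (2*m))) sums integral {-pi..pi} \<phi>"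
    using sums_Re[OF parseval(2)] unfolding re ire .
  have cancel: "2 * pi * ((norm (fps_nth F m))^2 * r ^ (2*m)) / (2*pi) = (norm (fps_nth F m))^2 * r ^ (2*m)"
    for m by (rule nonzero_mult_div_cancel_left) simp
  from sums_divide[OF S, of "2*pi"] show ?thesis unfolding cancel \<phi>_def .
qed

lemma continuous_on_eval_fps_circle:
  fixes F :: "complex fps"
  assumes "0 \<le> r" "ereal r < fps_conv_radius F"
  shows "continuous_on A (\<lambda>t. eval_fps F (of_real r * exp (\<i> * of_real t)))"
proof (rule continuous_on_eval_fps')
  show "continuous_on A (\<lambda>t. complex_of_real r * exp (\<i> * complex_of_real t))"
    by (intro continuous_intros)
  show "(\<lambda>t. complex_of_real r * exp (\<i> * complex_of_real t)) ` A \<subseteq> eball 0 (fps_conv_radius F)"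
    using assms by (auto simp: norm_mult)
qed

lemma integrable_eval_fps_circle:
  fixes F :: "complex fps"
  assumes "0 \<le> r" "ereal r < fps_conv_radius F"
  shows "(\<lambda>t. norm (eval_fps F (of_real r * exp (\<i> * of_real t)))) integrable_on {-pi..pi}"
    and "(\<lambda>t. (norm (eval_fps F (of_real r * exp (\<i> * of_real t))))^2) integrable_on {-pi..pi}"
proof -
  note cont = continuous_on_eval_fps_circle[OF assms, of "{-pi..pi}"]
  show "(\<lambda>t. norm (eval_fps F (of_real r * exp (\<i> * of_real t)))) integrable_on {-pi..pi}"
    by (rule integrable_continuous_interval[OF continuous_on_norm[OF cont]])
  show "(\<lambda>t. (norm (eval_fps F (of_real r * exp (\<i> * of_real t))))^2) integrable_on {-pi..pi}"
    by (rule integrable_continuous_interval[OF continuous_on_power[OF continuous_on_norm[OF cont]]])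
qed

lemma fps_coeff_integral_bound:
  fixes G :: "complex fps"
  assumes "0 \<le> r" "ereal r < fps_conv_radius G"
  shows "2 * pi * (norm (fps_nth G n) * r ^ n)
           \<le> integral {-pi..pi} (\<lambda>t. norm (eval_fps G (of_real r * exp (\<i> * of_real t))))"
proof -
  have I: "((\<lambda>t. eval_fps G (of_real r * exp (\<i> * of_real t)) * exp (- \<i> * of_int (int n) * of_real t))
             has_integral of_real (2*pi) * fps_nth G n * of_real r ^ n) {-pi..pi}"
    using fps_fourier_coeff[OF assms, of "int n"] by simp
  have "norm (integral {-pi..pi}
            (\<lambda>t. eval_fps G (of_real r * exp (\<i> * of_real t)) * exp (- \<i> * of_int (int n) * of_real t)))
          \<le> integral {-pi..pi} (\<lambda>t. norm (eval_fps G (of_real r * exp (\<i> * of_real t))))"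
    by (rule integral_norm_bound_integral[OF has_integral_integrable[OF I] integrable_eval_fps_circle(1)[OF assms]])
       (simp add: norm_mult)
  then have "norm (of_real (2*pi) * fps_nth G n * of_real r ^ n)
               \<le> integral {-pi..pi} (\<lambda>t. norm (eval_fps G (of_real r * exp (\<i> * of_real t))))"
    unfolding integral_unique[OF I] .
  then show ?thesis using assms(1) by (simp add: norm_mult norm_power)
qed

(* For a bounded measurable function the Lebesgue interval integral (used in the
   definition of the Fourier coefficients) agrees with the Henstock-Kurzweil integral. *)
lemma interval_integral_eq_integral_bounded:
  fixes h :: "real \<Rightarrow> complex"
  assumes "h \<in> borel_measurable borel" "h integrable_on {a..b}" "\<And>t. norm (h t) \<le> B" "a \<le> b"
  shows "(LBINT t=a..b. h t) = integral {a..b} h"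
proof (rule interval_integral_eq_integral[OF assms(4)])
  have "h absolutely_integrable_on {a..b}"
    using assms(3) by (intro absolutely_integrable_integrable_bound[OF _ assms(2), of "\<lambda>t. B"]) auto
  moreover have "(\<lambda>x. indicator {a..b} x *\<^sub>R h x) \<in> borel_measurable lborel" using assms(1) by simp
  ultimately show "set_integrable lborel {a..b} h"
    unfolding set_integrable_def using integrable_completion by blast
qed

lemma less_conv_radius_if_gt_1:
  fixes F :: "complex fps"
  assumes "x \<le> 1" "1 < fps_conv_radius F"
  shows "ereal x < fps_conv_radius F"
proof -
  have "ereal x \<le> 1" using assms(1) by (simp add: one_ereal_def)
  then show ?thesis using assms(2) by (rule order_le_less_trans)
qed

lemma conv_radius_gt_1_mult:
  fixes F G :: "complex fps"
  shows "1 < fps_conv_radius F \<Longrightarrow> 1 < fps_conv_radius G \<Longrightarrow> 1 < fps_conv_radius (F * G)"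
  by (rule order_less_le_trans[OF _ fps_conv_radius_mult]) simp

lemma conv_radius_gt_1_diff:
  fixes F G :: "complex fps"
  shows "1 < fps_conv_radius F \<Longrightarrow> 1 < fps_conv_radius G \<Longrightarrow> 1 < fps_conv_radius (F - G)"
  by (rule order_less_le_trans[OF _ fps_conv_radius_diff]) simp

lemma conv_radius_gt_1_deriv:
  fixes F :: "complex fps"
  shows "1 < fps_conv_radius F \<Longrightarrow> 1 < fps_conv_radius (fps_deriv F)"
  by (rule order_less_le_trans[OF _ fps_conv_radius_deriv])

lemma eval_fps_mult_disc:
  fixes F G :: "complex fps"
  assumes "norm z \<le> 1" "1 < fps_conv_radius F" "1 < fps_conv_radius G"
  shows "eval_fps (F * G) z = eval_fps F z * eval_fps G z"
  using assms by (intro eval_fps_mult less_conv_radius_if_gt_1)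

lemma eval_fps_add_disc:
  fixes F G :: "complex fps"
  assumes "norm z \<le> 1" "1 < fps_conv_radius F" "1 < fps_conv_radius G"
  shows "eval_fps (F + G) z = eval_fps F z + eval_fps G z"
  using assms by (intro eval_fps_add less_conv_radius_if_gt_1)

lemma ratio_le_powr:
  fixes num den e d \<epsilon> :: real
  assumes "0 \<le> num" "num \<le> 2*e" "0 < e" "0 < d" "e \<le> den" "d \<le> den" "0 < \<epsilon>" "\<epsilon> \<le> 1"
  shows "num / den \<le> 2 * (e / d) powr \<epsilon>"
proof (cases "1 \<le> e / d")
  case True
  have "num / den \<le> 2 * e / e" using assms by (intro frac_le) auto
  also have "\<dots> \<le> 2 * (e / d) powr \<epsilon>" using ge_one_powr_ge_zero[OF True, of \<epsilon>] assms by simp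
  finally show ?thesis .
next
  case False
  have "num / den \<le> 2 * e / d" using assms by (intro frac_le) auto
  also have "\<dots> = 2 * (e / d) powr 1" using assms by simp
  also have "(e / d) powr 1 \<le> (e / d) powr \<epsilon>" using False assms by (intro powr_mono') auto
  finally show ?thesis by simp
qed

lemma one_minus_power_bounds:
  fixes r :: real
  assumes "0 \<le> r" "r \<le> 1"
  shows "(1 - r) * real n * r ^ n \<le> 1 - r ^ n" and "1 - r ^ n \<le> real n * (1 - r)"
proof -
  have "(\<Sum>i<n. r ^ n) \<le> (\<Sum>i<n. r ^ i)" by (intro sum_mono power_decreasing) (use assms in auto)
  then have "(1 - r) * (real n * r ^ n) \<le> (1 - r) * (\<Sum>i<n. r ^ i)"
    using assms by (intro mult_left_mono) simp_all
  then show "(1 - r) * real n * r ^ n \<le> 1 - r ^ n" by (simp only: one_diff_power_eq mult.assoc)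
  have "1 + real n * (- (1 - r)) \<le> (1 + - (1 - r)) ^ n" by (rule Bernoulli_inequality) (use assms in simp)
  then show "1 - r ^ n \<le> real n * (1 - r)" by (simp add: algebra_simps)
qed

lemma abel_lower_bound:
  fixes y :: "nat \<Rightarrow> real"
  assumes y: "\<And>m. 0 \<le> y m" "summable y" and r: "0 \<le> r" "r \<le> 1" and T: "1/2 \<le> r ^ (2*T)"
  shows "(1 - r) * (\<Sum>m<T. real m * y m) \<le> suminf y - (\<Sum>m. y m * r^(2*m))"
proof -
  have r2: "0 \<le> r^(2*m)" "r^(2*m) \<le> 1" for m using r by (simp_all add: power_le_one)
  have sr: "summable (\<lambda>m. y m * r^(2*m))"
    using y r2 by (intro summable_comparison_test[OF _ y(2)]) (auto intro: mult_left_le)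
  have s1: "summable (\<lambda>m. y m * (1 - r^(2*m)))"
    using summable_diff[OF y(2) sr] by (simp add: algebra_simps)
  have "(1 - r) * (\<Sum>m<T. real m * y m) = (\<Sum>m<T. ((1 - r) * real m) * y m)"
    by (simp add: sum_distrib_left mult.assoc)
  also have "\<dots> \<le> (\<Sum>m<T. y m * (1 - r^(2*m)))"
  proof (rule sum_mono)
    fix m assume "m \<in> {..<T}"
    then have "r ^ (2*T) \<le> r ^ (2*m)" using r by (intro power_decreasing) auto
    then have "1/2 \<le> r ^ (2*m)" using T by linarith
    then have "(1 - r) * real m * 1 \<le> (1 - r) * real m * (2 * r^(2*m))"
      using r by (intro mult_left_mono) simp_all
    also have "\<dots> = (1 - r) * real (2*m) * r^(2*m)" by simp
    also have "\<dots> \<le> 1 - r^(2*m)" by (rule one_minus_power_bounds(1)[OF r])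
    finally show "((1 - r) * real m) * y m \<le> y m * (1 - r^(2*m))"
      using y(1)[of m] by (simp add: mult_left_mono mult.commute)
  qed
  also have "\<dots> \<le> (\<Sum>m. y m * (1 - r^(2*m)))"
    using y(1) r2 by (intro sum_le_suminf[OF s1]) auto
  also have "\<dots> = suminf y - (\<Sum>m. y m * r^(2*m))"
    using suminf_diff[OF y(2) sr] by (simp add: algebra_simps)
  finally show ?thesis .
qed

lemma abel_upper_bound:
  fixes x :: "nat \<Rightarrow> real"
  assumes x: "\<And>m. 0 \<le> x m" "summable x" "summable (\<lambda>m. real m * x m)" and r: "0 \<le> r" "r \<le> 1"
  shows "suminf x - (\<Sum>m. x m * r^(2*m)) \<le> 2 * (1 - r) * (\<Sum>m. real m * x m)"
proof -
  have r2: "0 \<le> r^(2*m)" "r^(2*m) \<le> 1" for m using r by (simp_all add: power_le_one)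
  have sr: "summable (\<lambda>m. x m * r^(2*m))"
    using x r2 by (intro summable_comparison_test[OF _ x(2)]) (auto intro: mult_left_le)
  have "suminf x - (\<Sum>m. x m * r^(2*m)) = (\<Sum>m. x m * (1 - r^(2*m)))"
    using suminf_diff[OF x(2) sr] by (simp add: algebra_simps)
  also have "\<dots> \<le> (\<Sum>m. 2 * (1 - r) * (real m * x m))"
  proof (rule suminf_le)
    show "x m * (1 - r^(2*m)) \<le> 2 * (1 - r) * (real m * x m)" for m
      using mult_left_mono[OF one_minus_power_bounds(2)[OF r, of "2*m"] x(1)[of m]] by (simp add: mult_ac)
    show "summable (\<lambda>m. x m * (1 - r^(2*m)))"
      using summable_diff[OF x(2) sr] by (simp add: algebra_simps)
    show "summable (\<lambda>m. 2 * (1 - r) * (real m * x m))" by (rule summable_mult[OF x(3)])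
  qed
  also have "\<dots> = 2 * (1 - r) * (\<Sum>m. real m * x m)" by (rule suminf_mult[OF x(3)])
  finally show ?thesis .
qed

(* A single Blaschke factor b_a(z) = (a - z) / (1 - a z) with a real zero 0 <= a < 1, both as
   a function and as the power series a - (1 - a^2) z / (1 - a z). *)

definition geometric_fps :: "real \<Rightarrow> complex fps" where
  "geometric_fps a = Abs_fps (\<lambda>m. complex_of_real a ^ m)"

definition blaschke_fps :: "real \<Rightarrow> complex fps" where
  "blaschke_fps a = fps_const (complex_of_real a) - fps_const (complex_of_real (1 - a^2)) * (fps_X * geometric_fps a)"

definition blaschke_factor :: "real \<Rightarrow> complex \<Rightarrow> complex" where
  "blaschke_factor a z = (complex_of_real a - z) / (1 - complex_of_real a * z)"

lemma fps_nth_geometric_fps [simp]: "fps_nth (geometric_fps a) m = complex_of_real a ^ m"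
  by (simp add: geometric_fps_def)

lemma conv_radius_geometric_fps:
  assumes "0 \<le> a" "a < 1"
  shows "1 < fps_conv_radius (geometric_fps a)"
proof -
  define \<rho> where "\<rho> = 2 / (1 + a)"
  have \<rho>: "1 < \<rho>" "a * \<rho> < 1" "0 \<le> a * \<rho>" using assms by (auto simp: \<rho>_def field_simps)
  have "summable (\<lambda>m. complex_of_real ((a * \<rho>) ^ m))"
    using \<rho> by (intro summable_of_real summable_geometric) auto
  then have "summable (\<lambda>m. fps_nth (geometric_fps a) m * complex_of_real \<rho> ^ m)"
    by (simp add: power_mult_distrib)
  then have "ereal (norm (complex_of_real \<rho>)) \<le> fps_conv_radius (geometric_fps a)"
    unfolding fps_conv_radius_def by (rule conv_radius_geI)
  moreover have "(1::ereal) < ereal (norm (complex_of_real \<rho>))" using \<rho> by (simp add: one_ereal_def)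
  ultimately show ?thesis by (rule order_less_le_trans[rotated])
qed

lemma one_minus_mult_nonzero:
  assumes "0 \<le> a" "a < 1" "norm z \<le> 1"
  shows "1 - complex_of_real a * z \<noteq> 0"
proof
  assume "1 - complex_of_real a * z = 0"
  then have "complex_of_real a * z = 1" by simp
  then have "norm (complex_of_real a * z) = 1" by simp
  moreover have "norm (complex_of_real a * z) \<le> a" using assms by (simp add: norm_mult mult_left_le)
  ultimately show False using assms by simp
qed

lemma eval_geometric_fps:
  assumes "0 \<le> a" "a < 1" "norm z \<le> 1"
  shows "eval_fps (geometric_fps a) z = 1 / (1 - complex_of_real a * z)"
proof -
  have "norm z < fps_conv_radius (geometric_fps a)"
    by (rule less_conv_radius_if_gt_1[OF assms(3) conv_radius_geometric_fps[OF assms(1,2)]])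
  from sums_eval_fps[OF this] have "(\<lambda>m. (complex_of_real a * z) ^ m) sums eval_fps (geometric_fps a) z"
    by (simp add: power_mult_distrib)
  moreover have "norm (complex_of_real a * z) < 1"
  proof -
    have "a * norm z \<le> a" using assms by (simp add: mult_left_le)
    then show ?thesis using assms by (simp add: norm_mult)
  qed
  ultimately show ?thesis using geometric_sums sums_unique2 by blast
qed

lemma conv_radius_blaschke_fps:
  assumes "0 \<le> a" "a < 1"
  shows "1 < fps_conv_radius (blaschke_fps a)"
  unfolding blaschke_fps_def
  by (intro conv_radius_gt_1_diff conv_radius_gt_1_mult conv_radius_geometric_fps[OF assms]) simp_all

lemma eval_blaschke_fps:
  assumes "0 \<le> a" "a < 1" "norm z \<le> 1"
  shows "eval_fps (blaschke_fps a) z = blaschke_factor a z"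
proof -
  have rH: "1 < fps_conv_radius (geometric_fps a)" by (rule conv_radius_geometric_fps[OF assms(1,2)])
  have rXH: "1 < fps_conv_radius (fps_X * geometric_fps a)" by (rule conv_radius_gt_1_mult[OF _ rH]) simp
  have rCXH: "1 < fps_conv_radius (fps_const (complex_of_real (1 - a^2)) * (fps_X * geometric_fps a))"
    by (rule conv_radius_gt_1_mult[OF _ rXH]) simp
  have "eval_fps (blaschke_fps a) z = of_real a - eval_fps (fps_const (complex_of_real (1 - a^2)) * (fps_X * geometric_fps a)) z"
    unfolding blaschke_fps_def by (subst eval_fps_diff[OF _ less_conv_radius_if_gt_1[OF assms(3) rCXH]]) simp_all
  also have "eval_fps (fps_const (complex_of_real (1 - a^2)) * (fps_X * geometric_fps a)) z
               = of_real (1 - a^2) * (z * eval_fps (geometric_fps a) z)"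
    by (simp add: eval_fps_mult_disc[OF assms(3) _ rXH] eval_fps_mult_disc[OF assms(3) _ rH])
  also have "of_real a - of_real (1 - a^2) * (z * eval_fps (geometric_fps a) z) = blaschke_factor a z"
    using one_minus_mult_nonzero[OF assms]
    by (simp add: eval_geometric_fps[OF assms] blaschke_factor_def field_simps)
       (simp add: algebra_simps power2_eq_square)
  finally show ?thesis .
qed

lemma blaschke_norm_identity:
  "(norm (1 - complex_of_real a * z))^2 - (norm (complex_of_real a - z))^2 = (1 - a^2) * (1 - (norm z)^2)"
  unfolding cmod_power2 by (simp add: power2_eq_square algebra_simps)

lemma norm_blaschke_factor_le:
  assumes "0 \<le> a" "a < 1" "norm z \<le> 1"
  shows "norm (blaschke_factor a z) \<le> 1"
proof -
  have "0 \<le> (1 - a^2) * (1 - (norm z)^2)"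
    using assms by (intro mult_nonneg_nonneg) (auto simp: power_le_one abs_square_le_1)
  then have "(norm (complex_of_real a - z))^2 \<le> (norm (1 - complex_of_real a * z))^2"
    using blaschke_norm_identity[of a z] by linarith
  then have "norm (complex_of_real a - z) \<le> norm (1 - complex_of_real a * z)"
    by (rule power2_le_imp_le) simp
  then show ?thesis
    using one_minus_mult_nonzero[OF assms] by (simp add: blaschke_factor_def norm_divide divide_le_eq_1)
qed

lemma norm_blaschke_factor_circle:
  assumes "0 \<le> a" "a < 1" "norm z = 1"
  shows "norm (blaschke_factor a z) = 1"
proof -
  have "(norm (complex_of_real a - z))^2 = (norm (1 - complex_of_real a * z))^2"
    using blaschke_norm_identity[of a z] assms(3) by simp
  then have "norm (complex_of_real a - z) = norm (1 - complex_of_real a * z)"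
    by (simp add: power2_eq_iff_nonneg)
  then show ?thesis
    using one_minus_mult_nonzero[OF assms(1,2)] assms(3) by (simp add: blaschke_factor_def norm_divide)
qed

lemma fps_deriv_blaschke_fps:
  "fps_deriv (blaschke_fps a) = fps_const (- complex_of_real (1 - a^2)) * (geometric_fps a * geometric_fps a)"
proof (rule fps_ext)
  fix n
  have "fps_nth (geometric_fps a * geometric_fps a) n = (\<Sum>i=0..n. complex_of_real a ^ n)"
    by (auto simp: fps_mult_nth power_add[symmetric] intro!: sum.cong)
  then have HH: "fps_nth (geometric_fps a * geometric_fps a) n = of_nat (n+1) * complex_of_real a ^ n"
    by simp
  have B: "fps_nth (blaschke_fps a) (Suc n) = - complex_of_real (1 - a^2) * complex_of_real a ^ n"
    by (simp add: blaschke_fps_def algebra_simps)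
  show "fps_nth (fps_deriv (blaschke_fps a)) n
      = fps_nth (fps_const (- complex_of_real (1 - a^2)) * (geometric_fps a * geometric_fps a)) n"
    by (simp only: fps_deriv_nth fps_mult_left_const_nth HH B Suc_eq_plus1[symmetric])
       (simp add: algebra_simps)
qed

lemma eval_deriv_blaschke_fps:
  assumes "0 \<le> a" "a < 1" "norm z \<le> 1"
  shows "eval_fps (fps_deriv (blaschke_fps a)) z
           = - complex_of_real (1 - a^2) * (eval_fps (geometric_fps a) z)^2"
proof -
  have rH: "1 < fps_conv_radius (geometric_fps a)" by (rule conv_radius_geometric_fps[OF assms(1,2)])
  show ?thesis
    unfolding fps_deriv_blaschke_fps
    by (simp add: eval_fps_mult_disc[OF assms(3)] conv_radius_gt_1_mult rH power2_eq_square)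
qed

lemma integral_geometric_fps_circle:
  assumes "0 \<le> a" "a < 1" "0 \<le> r" "r \<le> 1"
  shows "integral {-pi..pi} (\<lambda>t. (norm (eval_fps (geometric_fps a) (of_real r * exp (\<i> * of_real t))))^2)
           = 2 * pi / (1 - a^2 * r^2)"
proof -
  have ar: "a^2 * r^2 < 1"
  proof -
    have "a * a \<le> a" using assms by (simp add: mult_left_le)
    then have "a^2 < 1" using assms by (simp add: power2_eq_square)
    moreover have "a^2 * r^2 \<le> a^2" using assms by (simp add: mult_left_le power_le_one)
    ultimately show ?thesis by simp
  qed
  have "(norm (fps_nth (geometric_fps a) m))^2 * r ^ (2*m) = (a^2 * r^2) ^ m" for m
  proof -
    have pw: "(a ^ m)^2 = (a^2)^m" by (metis power_mult mult.commute)
    show ?thesis using assms by (simp add: norm_power power_mult power_mult_distrib abs_of_nonneg pw)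
  qed
  then have "(\<lambda>m. (a^2 * r^2) ^ m) sums
      (integral {-pi..pi} (\<lambda>t. (norm (eval_fps (geometric_fps a) (of_real r * exp (\<i> * of_real t))))^2) / (2*pi))"
    using fps_parseval_norm[OF assms(3) less_conv_radius_if_gt_1[OF assms(4) conv_radius_geometric_fps[OF assms(1,2)]]]
    by simp
  from sums_unique2[OF this geometric_sums] ar show ?thesis by (simp add: field_simps)
qed

lemma geometric_fps_circle_has_integral:
  assumes "0 \<le> a" "a < 1"
  shows "((\<lambda>t. (1 - a^2) * (norm (eval_fps (geometric_fps a) (exp (\<i> * of_real t))))^2) has_integral 2 * pi)
           {-pi..pi}"
proof -
  have r: "ereal 1 < fps_conv_radius (geometric_fps a)"
    by (rule less_conv_radius_if_gt_1[OF order_refl conv_radius_geometric_fps[OF assms]])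
  have "a * a \<le> a" using assms by (simp add: mult_left_le)
  then have a2: "1 - a^2 \<noteq> 0" using assms by (simp add: power2_eq_square)
  have "((\<lambda>t. (norm (eval_fps (geometric_fps a) (of_real 1 * exp (\<i> * of_real t))))^2) has_integral
          2 * pi / (1 - a^2)) {-pi..pi}"
    using integrable_integral[OF integrable_eval_fps_circle(2)[OF zero_le_one r]]
      integral_geometric_fps_circle[OF assms zero_le_one order_refl] by simp
  from has_integral_mult_right[OF this, of "1 - a^2"] a2 show ?thesis by simp
qed

lemma blaschke_log_deriv_circle:
  assumes a: "0 \<le> a" "a < 1" and z: "norm z = 1"
  shows "z * eval_fps (fps_deriv (blaschke_fps a)) z * cnj (eval_fps (blaschke_fps a) z)
           = complex_of_real ((1 - a^2) * (norm (eval_fps (geometric_fps a) z))^2)"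
proof -
  have z1: "norm z \<le> 1" using z by simp
  define h where "h = eval_fps (geometric_fps a) z"
  have h1: "h * (1 - complex_of_real a * z) = 1"
    using one_minus_mult_nonzero[OF a z1] by (simp add: h_def eval_geometric_fps[OF a z1])
  have zz: "z * cnj z = 1" using z by (simp add: complex_norm_square[symmetric])
  have "z * eval_fps (fps_deriv (blaschke_fps a)) z * cnj (eval_fps (blaschke_fps a) z)
          = z * (- of_real (1 - a^2) * (h * h)) * ((of_real a - cnj z) * cnj h)"
    by (simp add: eval_deriv_blaschke_fps[OF a z1] eval_blaschke_fps[OF a z1] blaschke_factor_def
          eval_geometric_fps[OF a z1] h_def power2_eq_square divide_inverse)
  also have "\<dots> = of_real (1 - a^2) * (h * cnj h) * (h * (z * cnj z - complex_of_real a * z))"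
    by (simp add: algebra_simps)
  also have "\<dots> = of_real (1 - a^2) * (h * cnj h)" by (simp only: zz h1 mult_1_right)
  also have "\<dots> = complex_of_real ((1 - a^2) * (norm h)^2)" by (simp only: of_real_mult complex_norm_square)
  finally show ?thesis unfolding h_def .
qed

(* The zeros a_k = 1 - 2^-(k+1); sum (1 - a_k) converges, so the product converges. *)
definition blaschke_zero :: "nat \<Rightarrow> real" where
  "blaschke_zero k = 1 - 1 / 2 ^ Suc k"

definition blaschke_prod_fps :: "nat \<Rightarrow> complex fps" where
  "blaschke_prod_fps N = fps_X * (\<Prod>k<N. blaschke_fps (blaschke_zero k))"

definition blaschke_prod :: "nat \<Rightarrow> complex \<Rightarrow> complex" where
  "blaschke_prod N z = z * (\<Prod>k<N. blaschke_factor (blaschke_zero k) z)"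

lemma blaschke_zero_bounds: "1/2 \<le> blaschke_zero k" "blaschke_zero k < 1" "0 \<le> blaschke_zero k"
proof -
  have "(2::real) ^ Suc k \<ge> 2" using power_increasing[of 1 "Suc k" "2::real"] by simp
  then have "1 / (2::real) ^ Suc k \<le> 1/2" by (intro divide_left_mono) auto
  then show "1/2 \<le> blaschke_zero k" by (simp add: blaschke_zero_def)
  then show "0 \<le> blaschke_zero k" by simp
  show "blaschke_zero k < 1" by (simp add: blaschke_zero_def)
qed

lemma one_minus_blaschke_zero: "1 - blaschke_zero k = (1/2) ^ Suc k"
  by (simp add: blaschke_zero_def power_one_over)

lemma blaschke_prod_fps_Suc:
  "blaschke_prod_fps (Suc N) = blaschke_prod_fps N * blaschke_fps (blaschke_zero N)"
  by (simp add: blaschke_prod_fps_def mult_ac)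

lemma blaschke_prod_Suc: "blaschke_prod (Suc N) z = blaschke_prod N z * blaschke_factor (blaschke_zero N) z"
  by (simp add: blaschke_prod_def mult_ac)

lemma conv_radius_blaschke_zero_fps: "1 < fps_conv_radius (blaschke_fps (blaschke_zero k))"
  by (rule conv_radius_blaschke_fps[OF blaschke_zero_bounds(3,2)])

lemma conv_radius_blaschke_prod_fps: "1 < fps_conv_radius (blaschke_prod_fps N)"
  by (induction N)
     (simp_all add: blaschke_prod_fps_def[of 0] blaschke_prod_fps_Suc conv_radius_gt_1_mult
        conv_radius_blaschke_zero_fps)

lemma eval_blaschke_prod_fps:
  assumes "norm z \<le> 1"
  shows "eval_fps (blaschke_prod_fps N) z = blaschke_prod N z"
proof (induction N)
  case 0
  then show ?case by (simp add: blaschke_prod_fps_def blaschke_prod_def)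
next
  case (Suc N)
  then show ?case
    by (simp add: blaschke_prod_fps_Suc blaschke_prod_Suc eval_fps_mult_disc[OF assms]
          conv_radius_blaschke_prod_fps conv_radius_blaschke_zero_fps
          eval_blaschke_fps[OF blaschke_zero_bounds(3,2) assms])
qed

lemma norm_blaschke_prod_le:
  assumes "norm z \<le> 1"
  shows "norm (blaschke_prod N z) \<le> 1"
proof (induction N)
  case 0
  then show ?case using assms by (simp add: blaschke_prod_def)
next
  case (Suc N)
  then show ?case
    using norm_blaschke_factor_le[OF blaschke_zero_bounds(3,2) assms]
    by (simp add: blaschke_prod_Suc norm_mult mult_le_one)
qed

lemma norm_blaschke_prod_circle:
  assumes "norm z = 1"
  shows "norm (blaschke_prod N z) = 1"
  by (induction N)
     (simp_all add: blaschke_prod_def[of 0] blaschke_prod_Suc norm_mult assms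
        norm_blaschke_factor_circle[OF blaschke_zero_bounds(3,2) assms])

lemma norm_blaschke_prod_antimono:
  assumes "norm z \<le> 1" "M \<le> N"
  shows "norm (blaschke_prod N z) \<le> norm (blaschke_prod M z)"
  using assms(2)
proof (induction N rule: dec_induct)
  case (step N)
  have "norm (blaschke_prod (Suc N) z) \<le> norm (blaschke_prod N z)"
    using norm_blaschke_factor_le[OF blaschke_zero_bounds(3,2) assms(1)]
    by (simp add: blaschke_prod_Suc norm_mult mult_left_le)
  then show ?case using step.IH by simp
qed simp

lemma fps_nth_blaschke_prod_fps_0 [simp]: "fps_nth (blaschke_prod_fps N) 0 = 0"
  by (simp add: blaschke_prod_fps_def)

lemma eval_deriv_blaschke_prod_Suc:
  fixes N :: nat
  assumes "norm z \<le> 1"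
  defines "a \<equiv> blaschke_zero N"
  shows "eval_fps (fps_deriv (blaschke_prod_fps (Suc N))) z
           = eval_fps (fps_deriv (blaschke_prod_fps N)) z * blaschke_factor a z
             + blaschke_prod N z * eval_fps (fps_deriv (blaschke_fps a)) z"
proof -
  have rQ: "1 < fps_conv_radius (blaschke_prod_fps N)" by (rule conv_radius_blaschke_prod_fps)
  have rB: "1 < fps_conv_radius (blaschke_fps a)" unfolding a_def by (rule conv_radius_blaschke_zero_fps)
  note rdQ = conv_radius_gt_1_deriv[OF rQ] and rdB = conv_radius_gt_1_deriv[OF rB]
  have a: "0 \<le> a" "a < 1" unfolding a_def by (rule blaschke_zero_bounds)+
  show ?thesis
    unfolding blaschke_prod_fps_Suc fps_deriv_mult a_def[symmetric]
    by (simp add: eval_fps_add_disc[OF assms(1)] eval_fps_mult_disc[OF assms(1)] conv_radius_gt_1_mult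
          rQ rB rdQ rdB eval_blaschke_fps[OF a assms(1)] eval_blaschke_prod_fps[OF assms(1)] algebra_simps)
qed

(* Q_N is unimodular on the circle, so its coefficients have total energy 1. *)
lemma blaschke_prod_coeff_energy: "(\<lambda>m. (norm (fps_nth (blaschke_prod_fps N) m))^2) sums 1"
proof -
  have r: "ereal 1 < fps_conv_radius (blaschke_prod_fps N)"
    by (rule less_conv_radius_if_gt_1[OF order_refl conv_radius_blaschke_prod_fps])
  have "(\<lambda>t. (norm (eval_fps (blaschke_prod_fps N) (of_real 1 * exp (\<i> * of_real t))))^2) = (\<lambda>t. 1)"
    by (simp add: eval_blaschke_prod_fps norm_blaschke_prod_circle)
  with fps_parseval_norm[OF zero_le_one r] show ?thesis by simp
qed

(* On the unit circle z Q_N' conj Q_N = 1 + sum_k (1 - a_k^2) / |1 - a_k z|^2: the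
   logarithmic derivatives of the factors add up. *)
lemma blaschke_prod_log_deriv_circle:
  assumes z: "norm z = 1"
  shows "z * eval_fps (fps_deriv (blaschke_prod_fps N)) z * cnj (blaschke_prod N z)
           = complex_of_real (1 + (\<Sum>k<N. (1 - (blaschke_zero k)^2) *
                                    (norm (eval_fps (geometric_fps (blaschke_zero k)) z))^2))"
proof (induction N)
  case 0
  have "z * cnj z = 1" using z by (simp add: complex_norm_square[symmetric])
  then show ?case by (simp add: blaschke_prod_fps_def blaschke_prod_def)
next
  case (Suc N)
  have z1: "norm z \<le> 1" using z by simp
  define a where "a = blaschke_zero N"
  have a: "0 \<le> a" "a < 1" unfolding a_def by (rule blaschke_zero_bounds)+
  define p where "p = blaschke_prod N z"
  define b where "b = blaschke_factor a z"
  define dq where "dq = eval_fps (fps_deriv (blaschke_prod_fps N)) z"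
  define db where "db = eval_fps (fps_deriv (blaschke_fps a)) z"
  have unimodular: "b * cnj b = 1" "p * cnj p = 1"
    using norm_blaschke_factor_circle[OF a z] norm_blaschke_prod_circle[OF z, of N]
    by (simp_all add: b_def p_def complex_norm_square[symmetric])
  have factor: "z * db * cnj b = complex_of_real ((1 - a^2) * (norm (eval_fps (geometric_fps a) z))^2)"
    using blaschke_log_deriv_circle[OF a z] by (simp add: db_def b_def eval_blaschke_fps[OF a z1])
  have "z * eval_fps (fps_deriv (blaschke_prod_fps (Suc N))) z * cnj (blaschke_prod (Suc N) z)
          = (z * dq * cnj p) * (b * cnj b) + (p * cnj p) * (z * db * cnj b)"
    by (simp add: eval_deriv_blaschke_prod_Suc[OF z1] blaschke_prod_Suc a_def b_def p_def dq_def db_def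
          algebra_simps)
  also have "\<dots> = z * dq * cnj p + z * db * cnj b" by (simp only: unimodular mult_1_left mult_1_right)
  finally show ?case using Suc.IH by (simp add: factor dq_def p_def a_def)
qed

(* The degree identity: integrating the previous formula gives sum m |q_m|^2 = N + 1. *)
lemma blaschke_prod_degree:
  "(\<lambda>m. real m * (norm (fps_nth (blaschke_prod_fps N) m))^2) sums (real N + 1)"
proof -
  define Q where "Q = blaschke_prod_fps N"
  define F where "F = fps_X * fps_deriv Q"
  define \<phi> where "\<phi> t = 1 + (\<Sum>k<N. (1 - (blaschke_zero k)^2) *
                          (norm (eval_fps (geometric_fps (blaschke_zero k)) (exp (\<i> * of_real t))))^2)" for t
  have rQ: "1 < fps_conv_radius Q" unfolding Q_def by (rule conv_radius_blaschke_prod_fps)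
  have rF: "1 < fps_conv_radius F" unfolding F_def by (simp add: conv_radius_gt_1_mult conv_radius_gt_1_deriv rQ)
  note parseval = fps_parseval(2)[OF zero_le_one less_conv_radius_if_gt_1[OF order_refl rF]
                                   less_conv_radius_if_gt_1[OF order_refl rQ]]
  have integrand: "eval_fps F (of_real 1 * exp (\<i> * of_real t)) * cnj (eval_fps Q (of_real 1 * exp (\<i> * of_real t)))
                     = complex_of_real (\<phi> t)" for t
  proof -
    have z: "norm (exp (\<i> * complex_of_real t)) = 1" by simp
    show ?thesis
      using blaschke_prod_log_deriv_circle[OF z, of N]
      by (simp add: F_def Q_def \<phi>_def eval_fps_mult_disc conv_radius_gt_1_deriv rQ[unfolded Q_def]
            eval_blaschke_prod_fps)
  qed
  have "(\<phi> has_integral 2 * pi + (\<Sum>k<N. 2 * pi)) {-pi..pi}"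
    unfolding \<phi>_def[abs_def]
    by (intro has_integral_add has_integral_sum geometric_fps_circle_has_integral blaschke_zero_bounds)
       (use has_integral_const_real[of "1::real" "-pi" pi] in auto)
  then have I: "integral {-pi..pi} (\<lambda>t. complex_of_real (\<phi> t)) = of_real (2 * pi * (real N + 1))"
    by (intro integral_unique has_integral_of_real) (simp add: algebra_simps)
  have T: "of_real (2*pi) * fps_nth F m * cnj (fps_nth Q m) * of_real 1 ^ (2*m)
                   = complex_of_real (2 * pi * (real m * (norm (fps_nth Q m))^2))" for m
  proof -
    have "of_real (2*pi) * fps_nth F m * cnj (fps_nth Q m) * of_real 1 ^ (2*m)
            = of_real (2*pi) * (of_nat m * (fps_nth Q m * cnj (fps_nth Q m)))"
      by (cases m) (simp_all add: F_def mult_ac)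
    then show ?thesis by (simp only: complex_norm_square[symmetric] of_real_mult of_real_of_nat_eq)
  qed
  have "(\<lambda>m. complex_of_real (2 * pi * (real m * (norm (fps_nth Q m))^2))) sums
                     complex_of_real (2 * pi * (real N + 1))"
    using parseval unfolding integrand T I .
  then have "(\<lambda>m. 2 * pi * (real m * (norm (fps_nth Q m))^2)) sums (2 * pi * (real N + 1))"
    by (simp only: sums_of_real_iff)
  from sums_divide[OF this, of "2*pi"] show ?thesis by (simp add: Q_def)
qed

lemma norm_deriv_blaschke_prod_Suc_le:
  fixes N :: nat
  assumes "norm z \<le> 1"
  defines "a \<equiv> blaschke_zero N"
  shows "norm (eval_fps (fps_deriv (blaschke_prod_fps (Suc N))) z)
           \<le> norm (eval_fps (fps_deriv (blaschke_prod_fps N)) z)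
             + (1 - a^2) * (norm (eval_fps (geometric_fps a) z))^2"
proof -
  have a: "0 \<le> a" "a < 1" unfolding a_def by (rule blaschke_zero_bounds)+
  have "0 \<le> 1 - a^2" using a by (simp add: power_le_one)
  then have "norm (- complex_of_real (1 - a^2)) = 1 - a^2" by (simp only: norm_minus_cancel norm_of_real abs_of_nonneg)
  then have db: "norm (eval_fps (fps_deriv (blaschke_fps a)) z) = (1 - a^2) * (norm (eval_fps (geometric_fps a) z))^2"
    by (simp only: eval_deriv_blaschke_fps[OF a assms(1)] norm_mult norm_power)
  have "norm (eval_fps (fps_deriv (blaschke_prod_fps (Suc N))) z)
      \<le> norm (eval_fps (fps_deriv (blaschke_prod_fps N)) z) * norm (blaschke_factor a z)
         + norm (blaschke_prod N z) * norm (eval_fps (fps_deriv (blaschke_fps a)) z)"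
    unfolding a_def eval_deriv_blaschke_prod_Suc[OF assms(1)]
    by (rule order_trans[OF norm_triangle_ineq]) (simp add: norm_mult)
  also have "\<dots> \<le> norm (eval_fps (fps_deriv (blaschke_prod_fps N)) z) * 1
                   + 1 * norm (eval_fps (fps_deriv (blaschke_fps a)) z)"
    using norm_blaschke_factor_le[OF a assms(1)] norm_blaschke_prod_le[OF assms(1)]
    by (intro add_mono mult_left_mono mult_right_mono) auto
  finally show ?thesis using db by simp
qed

lemma integral_norm_deriv_blaschke_prod_le:
  assumes r: "0 \<le> r" "r \<le> 1"
  shows "integral {-pi..pi} (\<lambda>t. norm (eval_fps (fps_deriv (blaschke_prod_fps N)) (of_real r * exp (\<i> * of_real t))))
         \<le> 2 * pi * (1 + (\<Sum>k<N. (1 - (blaschke_zero k)^2) / (1 - (blaschke_zero k)^2 * r^2)))"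
proof (induction N)
  case 0
  then show ?case by (simp add: blaschke_prod_fps_def)
next
  case (Suc N)
  define z where "z t = complex_of_real r * exp (\<i> * of_real t)" for t
  define a where "a = blaschke_zero N"
  have a: "0 \<le> a" "a < 1" unfolding a_def by (rule blaschke_zero_bounds)+
  have z1: "norm (z t) \<le> 1" for t using r by (simp add: z_def norm_mult)
  have rr: "ereal r < fps_conv_radius F" if "1 < fps_conv_radius F" for F :: "complex fps"
    by (rule less_conv_radius_if_gt_1[OF r(2) that])
  have rdQ: "1 < fps_conv_radius (fps_deriv (blaschke_prod_fps n))" for n
    by (rule conv_radius_gt_1_deriv[OF conv_radius_blaschke_prod_fps])
  note int_dQ = integrable_eval_fps_circle(1)[OF r(1) rr[OF rdQ]]
  have int_h: "(\<lambda>t. (1 - a^2) * (norm (eval_fps (geometric_fps a) (z t)))^2) integrable_on {-pi..pi}"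
    unfolding z_def
    by (intro integrable_on_mult_right integrable_eval_fps_circle(2)[OF r(1) rr[OF conv_radius_geometric_fps[OF a]]])
  have "integral {-pi..pi} (\<lambda>t. norm (eval_fps (fps_deriv (blaschke_prod_fps (Suc N))) (z t)))
          \<le> integral {-pi..pi} (\<lambda>t. norm (eval_fps (fps_deriv (blaschke_prod_fps N)) (z t))
                                    + (1 - a^2) * (norm (eval_fps (geometric_fps a) (z t)))^2)"
    unfolding z_def
    by (intro integral_le integrable_add int_dQ int_h[unfolded z_def])
       (use norm_deriv_blaschke_prod_Suc_le[OF z1[unfolded z_def], of N] in \<open>simp add: a_def\<close>)
  also have "\<dots> = integral {-pi..pi} (\<lambda>t. norm (eval_fps (fps_deriv (blaschke_prod_fps N)) (z t)))
                   + (1 - a^2) * (2 * pi / (1 - a^2 * r^2))"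
    using integral_add[OF int_dQ int_h[unfolded z_def]] integral_geometric_fps_circle[OF a r]
    by (simp add: z_def)
  also have "\<dots> \<le> 2 * pi * (1 + (\<Sum>k<Suc N. (1 - (blaschke_zero k)^2) / (1 - (blaschke_zero k)^2 * r^2)))"
    using Suc.IH by (simp add: z_def a_def algebra_simps)
  finally show ?case unfolding z_def .
qed

lemma blaschke_prod_coeff_deriv_bound:
  assumes r: "0 \<le> r" "r \<le> 1" and m: "1 \<le> m"
  shows "real m * norm (fps_nth (blaschke_prod_fps N) m) * r ^ (m - 1)
           \<le> 1 + (\<Sum>k<N. (1 - (blaschke_zero k)^2) / (1 - (blaschke_zero k)^2 * r^2))"
proof -
  define G where "G = fps_deriv (blaschke_prod_fps N)"
  have rG: "ereal r < fps_conv_radius G"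
    unfolding G_def by (rule less_conv_radius_if_gt_1[OF r(2) conv_radius_gt_1_deriv[OF conv_radius_blaschke_prod_fps]])
  have "fps_nth G (m - 1) = of_nat m * fps_nth (blaschke_prod_fps N) m"
    using m by (simp add: G_def fps_deriv_nth)
  then have "2 * pi * (real m * norm (fps_nth (blaschke_prod_fps N) m) * r ^ (m - 1))
               \<le> integral {-pi..pi} (\<lambda>t. norm (eval_fps G (of_real r * exp (\<i> * of_real t))))"
    using fps_coeff_integral_bound[OF r(1) rG, of "m - 1"] by (simp add: norm_mult mult_ac)
  also have "\<dots> \<le> 2 * pi * (1 + (\<Sum>k<N. (1 - (blaschke_zero k)^2) / (1 - (blaschke_zero k)^2 * r^2)))"
    unfolding G_def by (rule integral_norm_deriv_blaschke_prod_le[OF r])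
  finally show ?thesis by simp
qed

lemma blaschke_zero_term_bound:
  fixes \<epsilon> :: real and m k :: nat
  assumes eps: "0 < \<epsilon>" "\<epsilon> \<le> 1" and m: "1 \<le> m"
  shows "(1 - (blaschke_zero k)^2) / (1 - (blaschke_zero k)^2 * (1 - 1/(2*real m))^2)
           \<le> 2 * (2 * real m * (1/2)^(Suc k)) powr \<epsilon>"
proof -
  define e :: real where "e = (1/2)^(Suc k)"
  define r :: real where "r = 1 - 1/(2*real m)"
  define a where "a = blaschke_zero k"
  have ae: "a = 1 - e" using one_minus_blaschke_zero[of k] by (simp add: a_def e_def)
  have e: "0 < e" "e \<le> 1/2" unfolding e_def using power_decreasing[of 1 "Suc k" "1/2::real"] by simp_all
  have r1: "1/2 \<le> r" "r < 1" using m by (auto simp: r_def field_simps)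
  have a0: "0 \<le> a" "a < 1" using ae e by auto
  have "1 - a^2 = 2 * e - e^2" unfolding ae by (simp add: power2_eq_square algebra_simps)
  moreover have "e^2 \<le> e" using e by (simp add: power2_eq_square mult_left_le)
  ultimately have num: "0 \<le> 1 - a^2" "1 - a^2 \<le> 2 * e" using e zero_le_power2[of e] by linarith+
  have ar: "0 \<le> a * r" "a * r \<le> 1" using a0 r1 by (auto simp: mult_le_one)
  then have "(a * r)^2 \<le> a * r" by (simp add: power2_eq_square mult_left_le)
  then have den: "1 - a * r \<le> 1 - a^2 * r^2" by (simp add: power_mult_distrib)
  have "a * r \<le> a" "a * r \<le> r" using a0 r1 by (simp_all add: mult_left_le mult_left_le_one_le)
  then have "e \<le> 1 - a^2 * r^2" "1/(2*real m) \<le> 1 - a^2 * r^2" using den ae by (simp_all add: r_def)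
  then have "(1 - a^2) / (1 - a^2 * r^2) \<le> 2 * (e / (1/(2*real m))) powr \<epsilon>"
    using m by (intro ratio_le_powr num e(1) eps) simp_all
  also have "e / (1/(2*real m)) = 2 * real m * e" by simp
  finally show ?thesis by (simp add: a_def r_def e_def)
qed

lemma blaschke_zero_sum_bound:
  fixes \<epsilon> :: real and m N :: nat
  assumes eps: "0 < \<epsilon>" "\<epsilon> \<le> 1" and m: "1 \<le> m"
  shows "1 + (\<Sum>k<N. (1 - (blaschke_zero k)^2) / (1 - (blaschke_zero k)^2 * (1 - 1/(2*real m))^2))
         \<le> (1 + 4 / (1 - (1/2) powr \<epsilon>)) * real m powr \<epsilon>"
proof -
  define q :: real where "q = (1/2) powr \<epsilon>"
  have q: "0 < q" "q < 1" unfolding q_def using powr_less_mono2[OF eps(1), of "1/2" 1] by simp_all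
  have geom: "(2 * real m * (1/2)^(Suc k)) powr \<epsilon> = (2 * real m) powr \<epsilon> * q ^ Suc k" for k
  proof -
    have "((1/2::real) ^ Suc k) = (1/2) powr real (Suc k)" by (rule powr_realpow[symmetric]) simp
    then have "((1/2::real) ^ Suc k) powr \<epsilon> = ((1/2) powr real (Suc k)) powr \<epsilon>" by (simp only:)
    also have "\<dots> = (1/2) powr (real (Suc k) * \<epsilon>)" by (rule powr_powr)
    also have "\<dots> = q ^ Suc k" unfolding q_def by (rule powr_power[symmetric]) simp
    finally show ?thesis by (simp only: powr_mult)
  qed
  have "(\<Sum>k<N. q ^ Suc k) \<le> (\<Sum>k. q ^ k)"
    using q by (intro order_trans[OF sum_mono sum_le_suminf] summable_geometric)
               (auto simp: mult_left_le_one_le)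
  also have "\<dots> = 1 / (1 - q)" using q by (intro suminf_geometric) simp
  finally have gsum: "(\<Sum>k<N. q ^ Suc k) \<le> 1 / (1 - q)" .
  have "(2 * real m) powr \<epsilon> = 2 powr \<epsilon> * real m powr \<epsilon>" by (rule powr_mult)
  also have "\<dots> \<le> 2 * real m powr \<epsilon>" using powr_mono[OF eps(2), of 2] by (simp add: mult_right_mono)
  finally have two: "(2 * real m) powr \<epsilon> \<le> 2 * real m powr \<epsilon>" .
  have "(\<Sum>k<N. (1 - (blaschke_zero k)^2) / (1 - (blaschke_zero k)^2 * (1 - 1/(2*real m))^2))
          \<le> (\<Sum>k<N. 2 * ((2 * real m) powr \<epsilon> * q ^ Suc k))"
    by (intro sum_mono) (use blaschke_zero_term_bound[OF eps m] geom in simp)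
  also have "\<dots> = 2 * (2 * real m) powr \<epsilon> * (\<Sum>k<N. q ^ Suc k)" by (simp add: sum_distrib_left mult_ac)
  also have "\<dots> \<le> 2 * (2 * real m powr \<epsilon>) * (1 / (1 - q))"
    using q two gsum by (intro mult_mono) (auto intro: sum_nonneg)
  finally have S: "(\<Sum>k<N. (1 - (blaschke_zero k)^2) / (1 - (blaschke_zero k)^2 * (1 - 1/(2*real m))^2))
                     \<le> 4 / (1 - q) * real m powr \<epsilon>" by simp
  have "1 \<le> real m powr \<epsilon>" using m eps by (intro ge_one_powr_ge_zero) auto
  with S show ?thesis by (simp add: q_def algebra_simps)
qed

(* Uniform coefficient decay: |q_m| <= K m^(eps - 1) for all N, using r^(m-1) >= 1/2. *)
lemma blaschke_prod_coeff_bound: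
  fixes \<epsilon> :: real
  assumes eps: "0 < \<epsilon>" "\<epsilon> \<le> 1"
  obtains K where "\<And>N m. 1 \<le> m \<Longrightarrow> norm (fps_nth (blaschke_prod_fps N) m) \<le> K * real m powr (\<epsilon> - 1)"
proof
  fix N m :: nat assume m: "1 \<le> m"
  define C where "C = 1 + 4 / (1 - (1/2) powr \<epsilon>)"
  define r :: real where "r = 1 - 1/(2*real m)"
  have r0: "0 \<le> r" "r \<le> 1" using m by (auto simp: r_def field_simps)
  have "1 + real (m - 1) * (- (1/(2*real m))) \<le> (1 + - (1/(2*real m))) ^ (m - 1)"
    by (rule Bernoulli_inequality) (use m in \<open>simp add: field_simps\<close>)
  moreover have "1/2 \<le> 1 + real (m - 1) * (- (1/(2*real m)))"
    using m by (simp add: of_nat_diff field_simps)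
  ultimately have rp: "1/2 \<le> r ^ (m - 1)" by (simp add: r_def)
  have "real m * norm (fps_nth (blaschke_prod_fps N) m) * (1/2)
          \<le> real m * norm (fps_nth (blaschke_prod_fps N) m) * r ^ (m - 1)"
    by (intro mult_left_mono rp) auto
  also have "\<dots> \<le> C * real m powr \<epsilon>"
    unfolding r_def C_def
    by (rule order_trans[OF blaschke_prod_coeff_deriv_bound[OF r0[unfolded r_def] m] blaschke_zero_sum_bound[OF eps m]])
  finally have "norm (fps_nth (blaschke_prod_fps N) m) \<le> 2 * C * real m powr \<epsilon> / real m"
    using m by (simp add: field_simps)
  also have "\<dots> = 2 * C * real m powr (\<epsilon> - 1)" using m by (simp add: powr_diff)
  finally show "norm (fps_nth (blaschke_prod_fps N) m) \<le> 2 * C * real m powr (\<epsilon> - 1)" .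
qed

(* The infinite Blaschke product on the circle.  At z = 1 every factor equals -1, so the partial
   products oscillate there; that single point is set to 1, which affects no integral. *)

definition blaschke_approx :: "nat \<Rightarrow> complex \<Rightarrow> complex" where
  "blaschke_approx N z = (if z = 1 then 1 else blaschke_prod N z)"

definition blaschke_limit :: "complex \<Rightarrow> complex" where
  "blaschke_limit z = lim (\<lambda>N. blaschke_approx N z)"

lemma norm_one_minus_mult_circle:
  assumes "norm z = 1" "1/4 \<le> a"
  shows "norm (1 - z) / 2 \<le> norm (1 - complex_of_real a * z)"
proof -
  have "(Re z)^2 + (Im z)^2 = 1" using assms(1) by (simp add: cmod_power2[symmetric])
  then have unit: "Im z * Im z + Re z * Re z = 1" by (simp add: power2_eq_square add.commute)
  have eq: "(norm (1 - complex_of_real a * z))^2 = a * (norm (1 - z))^2 + (1 - a)^2"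
  proof -
    have "a*(a*(Im z*Im z)) + a*(a*(Re z*Re z)) = (a*a)*(Im z*Im z + Re z*Re z)"
         "a*(Im z*Im z) + a*(Re z*Re z) = a*(Im z*Im z + Re z*Re z)"
      by (simp_all add: algebra_simps)
    then have "a*(a*(Im z*Im z)) + a*(a*(Re z*Re z)) = a*a" "a*(Im z*Im z) + a*(Re z*Re z) = a"
      by (simp_all only: unit mult_1_right)
    then show ?thesis unfolding cmod_power2 by (simp add: power2_eq_square algebra_simps)
  qed
  have "(norm (1 - z) / 2)^2 = (1/4) * (norm (1 - z))^2" by (simp add: power2_eq_square)
  also have "\<dots> \<le> a * (norm (1 - z))^2" using assms(2) by (intro mult_right_mono) auto
  also have "\<dots> \<le> (norm (1 - complex_of_real a * z))^2" unfolding eq by simp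
  finally have "(norm (1 - z) / 2)^2 \<le> (norm (1 - complex_of_real a * z))^2" .
  then show ?thesis by (rule power2_le_imp_le) simp
qed

(* Away from z = 1 the factors satisfy |b_a(z) - 1| <= 4 (1 - a) / |1 - z|, which is
   summable over the zeros a_k. *)
lemma blaschke_factor_minus_one_bound:
  assumes z: "norm z = 1" "z \<noteq> 1" and a: "1/2 \<le> a" "a < 1"
  shows "norm (blaschke_factor a z - 1) \<le> 4 * (1 - a) / norm (1 - z)"
proof -
  have nz: "1 - complex_of_real a * z \<noteq> 0" using a z by (intro one_minus_mult_nonzero) auto
  have "blaschke_factor a z - 1 = - (complex_of_real (1 - a) * (1 + z)) / (1 - complex_of_real a * z)"
    using nz by (simp add: blaschke_factor_def field_simps)
  moreover have "norm (complex_of_real (1 - a)) = 1 - a"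
    using a(2) by (metis norm_of_real abs_of_nonneg diff_ge_0_iff_ge less_imp_le)
  ultimately have "norm (blaschke_factor a z - 1) = (1 - a) * norm (1 + z) / norm (1 - complex_of_real a * z)"
    by (simp only: norm_divide norm_mult norm_minus_cancel)
  also have "\<dots> \<le> (1 - a) * 2 / (norm (1 - z) / 2)"
  proof (rule frac_le)
    show "(1 - a) * norm (1 + z) \<le> (1 - a) * 2"
      using a norm_triangle_ineq[of 1 z] z by (intro mult_left_mono) auto
    show "norm (1 - z) / 2 \<le> norm (1 - complex_of_real a * z)"
      using a by (intro norm_one_minus_mult_circle z) auto
  qed (use a z in auto)
  finally show ?thesis by simp
qed

lemma blaschke_approx_converges:
  assumes z: "norm z = 1"
  shows "(\<lambda>N. blaschke_approx N z) \<longlonglongrightarrow> blaschke_limit z"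
proof -
  have "convergent (\<lambda>N. blaschke_approx N z)"
  proof (cases "z = 1")
    case True
    then show ?thesis by (simp add: blaschke_approx_def convergent_const)
  next
    case False
    have "summable (\<lambda>k. norm (blaschke_factor (blaschke_zero k) z - 1))"
    proof (rule summable_comparison_test)
      show "\<exists>N. \<forall>k\<ge>N. norm (norm (blaschke_factor (blaschke_zero k) z - 1)) \<le> 4 / norm (1 - z) * (1/2) ^ Suc k"
        using blaschke_factor_minus_one_bound[OF z False blaschke_zero_bounds(1,2)]
        by (simp add: one_minus_blaschke_zero mult.commute)
      show "summable (\<lambda>k. 4 / norm (1 - z) * (1/2::real) ^ Suc k)"
        by (intro summable_mult summable_geometric_iff[THEN iffD2] summable_Suc_iff[THEN iffD2]) simp
    qed
    then have "convergent_prod (\<lambda>k. blaschke_factor (blaschke_zero k) z)"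
      by (intro abs_convergent_prod_imp_convergent_prod summable_imp_abs_convergent_prod)
    then have "(\<lambda>N. z * (\<Prod>k<N. blaschke_factor (blaschke_zero k) z))
                 \<longlonglongrightarrow> z * prodinf (\<lambda>k. blaschke_factor (blaschke_zero k) z)"
      by (intro tendsto_mult tendsto_const has_prod_imp_tendsto' convergent_prod_has_prod)
    moreover have "(\<lambda>N. blaschke_approx N z) = (\<lambda>N. z * (\<Prod>k<N. blaschke_factor (blaschke_zero k) z))"
      using False by (simp add: blaschke_approx_def blaschke_prod_def)
    ultimately show ?thesis by (auto intro: convergentI)
  qed
  then show ?thesis unfolding blaschke_limit_def by (rule convergent_LIMSEQ_iff[THEN iffD1])
qed

lemma norm_blaschke_limit:
  assumes "norm z = 1"
  shows "norm (blaschke_limit z) = 1"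
proof -
  have "(\<lambda>N. norm (blaschke_approx N z)) \<longlonglongrightarrow> norm (blaschke_limit z)"
    by (rule tendsto_norm[OF blaschke_approx_converges[OF assms]])
  moreover have "(\<lambda>N. norm (blaschke_approx N z)) = (\<lambda>N. 1)"
    using norm_blaschke_prod_circle[OF assms] by (intro ext) (simp add: blaschke_approx_def)
  ultimately show ?thesis using LIMSEQ_unique tendsto_const by metis
qed

lemma continuous_on_blaschke_prod: "continuous_on circle (blaschke_prod N)"
proof -
  have "continuous_on circle
          (\<lambda>z. z * (\<Prod>k<N. (complex_of_real (blaschke_zero k) - z) / (1 - complex_of_real (blaschke_zero k) * z)))"
    by (intro continuous_intros ballI one_minus_mult_nonzero blaschke_zero_bounds) simp_all
  then show ?thesis by (simp add: blaschke_prod_def[abs_def] blaschke_factor_def)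
qed

lemma blaschke_limit_measurable: "blaschke_limit \<in> borel_measurable (restrict_space borel circle)"
proof (rule borel_measurable_LIMSEQ_metric)
  show "blaschke_approx N \<in> borel_measurable (restrict_space borel circle)" for N
  proof -
    have "{z \<in> space (restrict_space borel circle). z = 1} \<in> sets (restrict_space borel circle)"
      by (auto simp: space_restrict_space sets_restrict_space)
    then have "(\<lambda>z. if z = 1 then 1 else blaschke_prod N z) \<in> borel_measurable (restrict_space borel circle)"
      by (intro measurable_If borel_measurable_continuous_on_restrict continuous_on_blaschke_prod) simp_all
    then show ?thesis by (simp add: blaschke_approx_def[abs_def])
  qed
  show "(\<lambda>N. blaschke_approx N z) \<longlonglongrightarrow> blaschke_limit z" if "z \<in> space (restrict_space borel circle)" for z
    using that by (intro blaschke_approx_converges) (simp add: space_restrict_space)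
qed

definition blaschke_coeff :: "nat \<Rightarrow> complex" where
  "blaschke_coeff m = lim (\<lambda>N. fps_nth (blaschke_prod_fps N) m)"

(* Dominated convergence from Q_N to the limit in the Fourier integrals; this also shows
   that the limits defining c_m exist. *)
lemma blaschke_limit_fourier:
  fixes n :: int
  defines "\<phi> \<equiv> \<lambda>t. blaschke_limit (exp (\<i> * of_real t)) * exp (- \<i> * of_int n * of_real t)"
  shows "\<phi> integrable_on {-pi..pi}"
    and "(\<lambda>N. of_real (2*pi) * (if n \<ge> 0 then fps_nth (blaschke_prod_fps N) (nat n) else 0))
           \<longlonglongrightarrow> integral {-pi..pi} \<phi>"
proof -
  define f where "f N t = blaschke_approx N (exp (\<i> * of_real t)) * exp (- \<i> * of_int n * of_real t)" for N t
  have r: "ereal 1 < fps_conv_radius (blaschke_prod_fps N)" for N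
    by (rule less_conv_radius_if_gt_1[OF order_refl conv_radius_blaschke_prod_fps])
  have int: "(f N has_integral of_real (2*pi) * (if n \<ge> 0 then fps_nth (blaschke_prod_fps N) (nat n) else 0))
               {-pi..pi}" for N
  proof (rule has_integral_spike_finite[of "{0}"])
    show "((\<lambda>t. blaschke_prod N (exp (\<i> * of_real t)) * exp (- \<i> * of_int n * of_real t)) has_integral
             of_real (2*pi) * (if n \<ge> 0 then fps_nth (blaschke_prod_fps N) (nat n) else 0)) {-pi..pi}"
      using fps_fourier_coeff[OF zero_le_one r[of N], where n = n] by (auto simp: eval_blaschke_prod_fps)
    show "f N t = blaschke_prod N (exp (\<i> * of_real t)) * exp (- \<i> * of_int n * of_real t)"
      if "t \<in> {-pi..pi} - {0}" for t
      using that exp_i_eq_1_imp_zero[of t] by (auto simp: f_def blaschke_approx_def)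
  qed simp
  have dom: "norm (f N t) \<le> 1" for N t
    by (simp add: f_def norm_mult blaschke_approx_def norm_blaschke_prod_circle)
  have conv: "(\<lambda>N. f N t) \<longlonglongrightarrow> \<phi> t" for t
    unfolding f_def \<phi>_def by (intro tendsto_mult tendsto_const blaschke_approx_converges) simp
  note dc = dominated_convergence[OF has_integral_integrable[OF int] integrable_const_ivl dom conv]
  show "\<phi> integrable_on {-pi..pi}" by (rule dc(1))
  show "(\<lambda>N. of_real (2*pi) * (if n \<ge> 0 then fps_nth (blaschke_prod_fps N) (nat n) else 0))
           \<longlonglongrightarrow> integral {-pi..pi} \<phi>"
    using dc(2) unfolding integral_unique[OF int] .
qed

lemma blaschke_coeff_limit: "(\<lambda>N. fps_nth (blaschke_prod_fps N) m) \<longlonglongrightarrow> blaschke_coeff m"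
proof -
  have "(\<lambda>N. of_real (2*pi) * fps_nth (blaschke_prod_fps N) m / of_real (2*pi)) \<longlonglongrightarrow>
          integral {-pi..pi} (\<lambda>t. blaschke_limit (exp (\<i> * of_real t)) * exp (- \<i> * of_int (int m) * of_real t))
            / of_real (2*pi)"
    using blaschke_limit_fourier(2)[of "int m"] by (intro tendsto_divide tendsto_const) simp_all
  then have "convergent (\<lambda>N. fps_nth (blaschke_prod_fps N) m)" by (auto intro: convergentI)
  then show ?thesis unfolding blaschke_coeff_def by (rule convergent_LIMSEQ_iff[THEN iffD1])
qed

lemma blaschke_limit_fourier_integral:
  "integral {-pi..pi} (\<lambda>t. blaschke_limit (exp (\<i> * of_real t)) * exp (- \<i> * of_int n * of_real t))
     = of_real (2*pi) * (if n \<ge> 0 then blaschke_coeff (nat n) else 0)"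
proof -
  have "(\<lambda>N. of_real (2*pi) * (if n \<ge> 0 then fps_nth (blaschke_prod_fps N) (nat n) else 0))
          \<longlonglongrightarrow> of_real (2*pi) * (if n \<ge> 0 then blaschke_coeff (nat n) else 0)"
    by (cases "n \<ge> 0") (simp_all add: tendsto_mult_left blaschke_coeff_limit)
  with blaschke_limit_fourier(2) show ?thesis using LIMSEQ_unique by blast
qed

lemma blaschke_coeff_0 [simp]: "blaschke_coeff 0 = 0"
  using blaschke_coeff_limit[of 0] LIMSEQ_unique[OF _ tendsto_const] by simp

lemma blaschke_coeff_bound:
  fixes \<epsilon> :: real
  assumes "0 < \<epsilon>" "\<epsilon> \<le> 1"
  obtains K where "\<And>m. 1 \<le> m \<Longrightarrow> norm (blaschke_coeff m) \<le> K * real m powr (\<epsilon> - 1)"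
proof -
  obtain K where K: "\<And>N m. 1 \<le> m \<Longrightarrow> norm (fps_nth (blaschke_prod_fps N) m) \<le> K * real m powr (\<epsilon> - 1)"
    using blaschke_prod_coeff_bound[OF assms] by blast
  have "norm (blaschke_coeff m) \<le> K * real m powr (\<epsilon> - 1)" if "1 \<le> m" for m
    using K[OF that] by (intro tendsto_le[OF trivial_limit_sequentially tendsto_const
                                   tendsto_norm[OF blaschke_coeff_limit]]) auto
  then show thesis by (rule that)
qed

lemma blaschke_prod_coeff_sq_majorant:
  obtains w :: "nat \<Rightarrow> real"
  where "summable w" and "\<And>N m. (norm (fps_nth (blaschke_prod_fps N) m))^2 \<le> w m"
proof -
  obtain K where K: "\<And>N m. 1 \<le> m \<Longrightarrow> norm (fps_nth (blaschke_prod_fps N) m) \<le> K * real m powr (1/4 - 1)"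
    using blaschke_prod_coeff_bound[of "1/4"] by auto
  define w where "w m = K^2 * real m powr (-3/2)" for m
  have "summable w" unfolding w_def by (intro summable_mult) (simp add: summable_real_powr_iff)
  moreover have "(norm (fps_nth (blaschke_prod_fps N) m))^2 \<le> w m" for N m
  proof (cases "m = 0")
    case False
    then have "(norm (fps_nth (blaschke_prod_fps N) m))^2 \<le> (K * real m powr (1/4 - 1))^2"
      using K[of m N] by (intro power_mono) auto
    also have "\<dots> = w m"
    proof -
      have "(real m powr (1/4 - 1))^2 = real m powr (of_nat 2 * (1/4 - 1))"
        using False by (intro powr_power) simp
      then show ?thesis by (simp add: w_def power_mult_distrib)
    qed
    finally show ?thesis .
  qed (simp add: w_def)
  ultimately show thesis using that by blast
qed

lemma blaschke_coeff_weighted_energy: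
  assumes r: "0 \<le> r" "r \<le> 1"
  shows "summable (\<lambda>m. (norm (blaschke_coeff m))^2 * r^(2*m))"
    and "(\<lambda>N. \<Sum>m. (norm (fps_nth (blaschke_prod_fps N) m))^2 * r^(2*m))
           \<longlonglongrightarrow> (\<Sum>m. (norm (blaschke_coeff m))^2 * r^(2*m))"
proof -
  obtain w where w: "summable w" "\<And>N m. (norm (fps_nth (blaschke_prod_fps N) m))^2 \<le> w m"
    using blaschke_prod_coeff_sq_majorant by blast
  have bound: "(norm (fps_nth (blaschke_prod_fps N) m))^2 * r^(2*m) \<le> w m" for N m
    using w(2)[of N m] r by (intro order_trans[OF mult_left_le]) (auto simp: power_le_one)
  have lim: "(\<lambda>N. (norm (fps_nth (blaschke_prod_fps N) m))^2 * r^(2*m))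
               \<longlonglongrightarrow> (norm (blaschke_coeff m))^2 * r^(2*m)" for m
    by (intro tendsto_mult_right tendsto_power tendsto_norm blaschke_coeff_limit)
  have bnd: "eventually (\<lambda>(m, N). norm ((norm (fps_nth (blaschke_prod_fps N) m))^2 * r^(2*m)) \<le> w m)
               (at_top \<times>\<^sub>F sequentially)"
    using bound r by (intro always_eventually) auto
  from tannerys_theorem[OF lim bnd w(1)]
  have "summable (\<lambda>m. norm ((norm (blaschke_coeff m))^2 * r^(2*m)))"
    and "(\<lambda>N. \<Sum>m. (norm (fps_nth (blaschke_prod_fps N) m))^2 * r^(2*m))
           \<longlonglongrightarrow> (\<Sum>m. (norm (blaschke_coeff m))^2 * r^(2*m))"
    by simp_all
  then show "summable (\<lambda>m. (norm (blaschke_coeff m))^2 * r^(2*m))"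
    and "(\<lambda>N. \<Sum>m. (norm (fps_nth (blaschke_prod_fps N) m))^2 * r^(2*m))
           \<longlonglongrightarrow> (\<Sum>m. (norm (blaschke_coeff m))^2 * r^(2*m))"
    using r by (simp_all add: abs_of_nonneg)
qed

lemma blaschke_coeff_energy: "(\<lambda>m. (norm (blaschke_coeff m))^2) sums 1"
proof -
  have "(\<lambda>N. \<Sum>m. (norm (fps_nth (blaschke_prod_fps N) m))^2) \<longlonglongrightarrow> (\<Sum>m. (norm (blaschke_coeff m))^2)"
    using blaschke_coeff_weighted_energy(2)[of 1] by simp
  moreover have "(\<Sum>m. (norm (fps_nth (blaschke_prod_fps N) m))^2) = 1" for N
    using blaschke_prod_coeff_energy sums_unique by metis
  ultimately have "(\<Sum>m. (norm (blaschke_coeff m))^2) = 1" using LIMSEQ_unique[OF _ tendsto_const] by simp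
  moreover have "summable (\<lambda>m. (norm (blaschke_coeff m))^2)"
    using blaschke_coeff_weighted_energy(1)[of 1] by simp
  ultimately show ?thesis using summable_sums by metis
qed

(* Inside the disc |Q_N| decreases in N, hence so do its energies on circles of radius r. *)
lemma blaschke_prod_weighted_energy_antimono:
  assumes r: "0 \<le> r" "r \<le> 1" and "M \<le> N"
  shows "(\<Sum>m. (norm (fps_nth (blaschke_prod_fps N) m))^2 * r^(2*m))
           \<le> (\<Sum>m. (norm (fps_nth (blaschke_prod_fps M) m))^2 * r^(2*m))"
proof -
  define E where "E n = integral {-pi..pi} (\<lambda>t. (norm (eval_fps (blaschke_prod_fps n) (of_real r * exp (\<i> * of_real t))))^2)"
    for n
  have rr: "ereal r < fps_conv_radius (blaschke_prod_fps n)" for n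
    by (rule less_conv_radius_if_gt_1[OF r(2) conv_radius_blaschke_prod_fps])
  have sums: "(\<Sum>m. (norm (fps_nth (blaschke_prod_fps n) m))^2 * r^(2*m)) = E n / (2*pi)" for n
    unfolding E_def by (rule sums_unique[OF fps_parseval_norm[OF r(1) rr], symmetric])
  have "E N \<le> E M"
    unfolding E_def
  proof (rule integral_le[OF integrable_eval_fps_circle(2)[OF r(1) rr] integrable_eval_fps_circle(2)[OF r(1) rr]])
    fix t
    have z: "norm (complex_of_real r * exp (\<i> * of_real t)) \<le> 1" using r by (simp add: norm_mult)
    show "(norm (eval_fps (blaschke_prod_fps N) (of_real r * exp (\<i> * of_real t))))^2
            \<le> (norm (eval_fps (blaschke_prod_fps M) (of_real r * exp (\<i> * of_real t))))^2"
      unfolding eval_blaschke_prod_fps[OF z] by (intro power_mono norm_blaschke_prod_antimono[OF z assms(3)]) simp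
  qed
  then show ?thesis unfolding sums by (simp add: divide_right_mono)
qed

lemma blaschke_coeff_weighted_le:
  assumes r: "0 \<le> r" "r \<le> 1"
  shows "(\<Sum>m. (norm (blaschke_coeff m))^2 * r^(2*m)) \<le> (\<Sum>m. (norm (fps_nth (blaschke_prod_fps M) m))^2 * r^(2*m))"
  by (rule tendsto_le[OF trivial_limit_sequentially tendsto_const blaschke_coeff_weighted_energy(2)[OF r]])
     (use blaschke_prod_weighted_energy_antimono[OF r] in \<open>auto intro: eventually_sequentiallyI\<close>)

(* Were sum m |c_m|^2 = S finite, choose M > 2 S and T with sum_{m<T} m |q_m|^2 > M for
   Q_M; at r = 1 - 1/(4T) the two Abel bounds, glued by the energy comparison above, give
   M < 2 S. *)
lemma blaschke_coeff_not_summable: "\<not> summable (\<lambda>m. real m * (norm (blaschke_coeff m))^2)"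
proof
  assume summable: "summable (\<lambda>m. real m * (norm (blaschke_coeff m))^2)"
  define S where "S = (\<Sum>m. real m * (norm (blaschke_coeff m))^2)"
  define M :: nat where "M = nat \<lceil>2 * S\<rceil> + 1"
  define x where "x = (\<lambda>m. (norm (blaschke_coeff m))^2)"
  define y where "y = (\<lambda>m. (norm (fps_nth (blaschke_prod_fps M) m))^2)"
  have "(\<lambda>T. \<Sum>m<T. real m * y m) \<longlonglongrightarrow> real M + 1"
    using blaschke_prod_degree[of M] by (simp add: sums_def y_def)
  then have "eventually (\<lambda>T. real M < (\<Sum>m<T. real m * y m)) sequentially" by (rule order_tendstoD) simp
  then obtain T where T: "real M < (\<Sum>m<T. real m * y m)" by (auto simp: eventually_sequentially)
  then have T1: "1 \<le> T" by (cases T) auto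
  define r :: real where "r = 1 - 1 / (4 * real T)"
  have r: "0 \<le> r" "r \<le> 1" "r < 1" using T1 by (auto simp: r_def field_simps)
  have "1/2 \<le> r ^ (2*T)"
  proof -
    have "1 + real (2*T) * (- (1 / (4 * real T))) \<le> (1 + - (1 / (4 * real T))) ^ (2*T)"
      by (rule Bernoulli_inequality) (use T1 in \<open>simp add: field_simps\<close>)
    then show ?thesis using T1 by (simp add: r_def field_simps)
  qed
  have "(1 - r) * real M < (1 - r) * (\<Sum>m<T. real m * y m)" using T r by simp
  also have "\<dots> \<le> suminf y - (\<Sum>m. y m * r^(2*m))"
    using blaschke_prod_coeff_energy[of M] \<open>1/2 \<le> r ^ (2*T)\<close> r
    by (intro abel_lower_bound) (auto simp: y_def sums_iff)
  also have "\<dots> \<le> suminf x - (\<Sum>m. x m * r^(2*m))"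
    using blaschke_coeff_weighted_le[OF r(1,2), of M] blaschke_prod_coeff_energy[of M] blaschke_coeff_energy
    by (simp add: x_def y_def sums_iff)
  also have "\<dots> \<le> 2 * (1 - r) * S"
    using blaschke_coeff_energy summable unfolding S_def x_def
    by (intro abel_upper_bound[OF _ _ _ r(1,2)]) (auto simp: sums_iff)
  finally have "(1 - r) * real M < (1 - r) * (2 * S)" by (simp only: mult.assoc mult.left_commute)
  then have "real M < 2 * S" by (rule mult_left_less_imp_less) (use r in simp)
  moreover have "2 * S < real M" unfolding M_def by linarith
  ultimately show False by simp
qed

lemma cnj_blaschke_limit_measurable:
  "(\<lambda>z. cnj (blaschke_limit z)) \<in> borel_measurable (restrict_space borel circle)"
proof -
  have "cnj \<in> borel_measurable borel" by (intro borel_measurable_continuous_onI continuous_on_cnj continuous_on_id)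
  from measurable_compose[OF blaschke_limit_measurable this] show ?thesis by (simp add: o_def)
qed

lemma fourier_coeff_cnj_blaschke_limit:
  "fourier_coeff (\<lambda>z. cnj (blaschke_limit z)) n = cnj (if n \<le> 0 then blaschke_coeff (nat (- n)) else 0)"
proof -
  define g where "g = (\<lambda>t. blaschke_limit (exp (\<i> * of_real t)) * exp (- \<i> * of_int (- n) * of_real t))"
  have cnj_g: "cnj (blaschke_limit (exp (\<i> * of_real t))) * exp (- \<i> * of_int n * of_real t) = cnj (g t)" for t
    by (simp add: g_def exp_cnj)
  have "(\<lambda>t. exp (\<i> * complex_of_real t)) \<in> measurable borel (restrict_space borel circle)"
    by (intro measurable_restrict_space2 borel_measurable_continuous_onI continuous_intros) auto
  from measurable_compose[OF this cnj_blaschke_limit_measurable]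
  have "(\<lambda>t. cnj (blaschke_limit (exp (\<i> * complex_of_real t)))) \<in> borel_measurable borel" by simp
  then have "(\<lambda>t. cnj (g t)) \<in> borel_measurable borel"
    unfolding cnj_g[symmetric]
    by (rule borel_measurable_times) (intro borel_measurable_continuous_onI continuous_intros)
  moreover have "(\<lambda>t. cnj (g t)) integrable_on {-pi..pi}"
    using blaschke_limit_fourier(1)[of "- n"] unfolding integrable_on_cnj_iff g_def .
  moreover have "norm (cnj (g t)) \<le> 1" for t
    by (simp add: g_def norm_mult norm_blaschke_limit)
  ultimately have "(LBINT t=-pi..pi. cnj (g t)) = integral {-pi..pi} (\<lambda>t. cnj (g t))"
    by (intro interval_integral_eq_integral_bounded) auto
  also have "\<dots> = cnj (integral {-pi..pi} g)" by (simp add: integral_cnj)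
  finally have "(LBINT t=-pi..pi. cnj (g t)) = cnj (integral {-pi..pi} g)" .
  then show ?thesis
    unfolding fourier_coeff_def cnj_g using blaschke_limit_fourier_integral[of "- n"]
    by (simp add: g_def)
qed

lemma summable_on_fourier_weights_iff:
  fixes p :: real
  shows "(\<lambda>n::int. real_of_int \<bar>n\<bar> powr p * (cmod (fourier_coeff (\<lambda>z. cnj (blaschke_limit z)) n))\<^sup>2) summable_on UNIV
         \<longleftrightarrow> summable (\<lambda>m. real m powr p * (norm (blaschke_coeff m))^2)"
proof -
  define \<phi> where "\<phi> n = real_of_int \<bar>n\<bar> powr p * (cmod (fourier_coeff (\<lambda>z. cnj (blaschke_limit z)) n))\<^sup>2"
    for n :: int
  have \<phi>: "\<phi> n = (if n \<le> 0 then real (nat (- n)) powr p * (norm (blaschke_coeff (nat (- n))))^2 else 0)" for n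
    by (simp add: \<phi>_def fourier_coeff_cnj_blaschke_limit)
  have "\<phi> summable_on UNIV \<longleftrightarrow> \<phi> summable_on range (\<lambda>m. - int m)"
  proof (rule summable_on_cong_neutral)
    fix n assume "n \<in> UNIV - range (\<lambda>m. - int m)"
    moreover have "n = - int (nat (- n))" if "n \<le> 0" using that by simp
    ultimately have "\<not> n \<le> 0" by blast
    then show "\<phi> n = 0" by (simp add: \<phi>)
  qed auto
  also have "\<dots> \<longleftrightarrow> (\<phi> \<circ> (\<lambda>m. - int m)) summable_on UNIV"
    by (rule summable_on_reindex) (simp add: inj_on_def)
  also have "\<phi> \<circ> (\<lambda>m. - int m) = (\<lambda>m. real m powr p * (norm (blaschke_coeff m))^2)"
    by (simp add: \<phi> o_def)
  also have "\<dots> summable_on UNIV \<longleftrightarrow> summable (\<lambda>m. real m powr p * (norm (blaschke_coeff m))^2)"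
    by (rule summable_on_UNIV_nonneg_real_iff) simp
  finally show ?thesis unfolding \<phi>_def .
qed

(* For s < 1/2 the bound |c_m| <= K m^(eps - 1) with small eps makes the series converge. *)
lemma blaschke_coeff_weighted_summable:
  fixes s :: real
  assumes "s < 1/2"
  shows "summable (\<lambda>m. real m powr (2 * s) * (norm (blaschke_coeff m))^2)"
proof -
  define \<epsilon> where "\<epsilon> = min 1 ((1 - 2 * s) / 4)"
  have "0 < \<epsilon>" using assms by (simp add: \<epsilon>_def)
  moreover have "\<epsilon> \<le> 1" unfolding \<epsilon>_def by (rule min.cobounded1)
  moreover have "\<epsilon> \<le> (1 - 2 * s) / 4" unfolding \<epsilon>_def by (rule min.cobounded2)
  ultimately have eps: "0 < \<epsilon>" "\<epsilon> \<le> 1" "\<epsilon> \<le> (1 - 2 * s) / 4" by auto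
  obtain K where K: "\<And>m. 1 \<le> m \<Longrightarrow> norm (blaschke_coeff m) \<le> K * real m powr (\<epsilon> - 1)"
    using blaschke_coeff_bound[OF eps(1,2)] by blast
  define e where "e = 2 * s + 2 * (\<epsilon> - 1)"
  have "e < -1" using eps assms by (simp add: e_def)
  then have majorant: "summable (\<lambda>m. K^2 * real m powr e)"
    by (intro summable_mult) (simp add: summable_real_powr_iff)
  have bound: "norm (real m powr (2 * s) * (norm (blaschke_coeff m))^2) \<le> K^2 * real m powr e" if "1 \<le> m" for m
  proof -
    have "(norm (blaschke_coeff m))^2 \<le> (K * real m powr (\<epsilon> - 1))^2" by (rule power_mono[OF K[OF that]]) simp
    also have "\<dots> = K^2 * real m powr (2 * (\<epsilon> - 1))"
    proof -
      have "(real m powr (\<epsilon> - 1))^2 = real m powr (of_nat 2 * (\<epsilon> - 1))"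
        using that by (intro powr_power) simp
      then show ?thesis by (simp add: power_mult_distrib)
    qed
    finally have "real m powr (2 * s) * (norm (blaschke_coeff m))^2
                    \<le> real m powr (2 * s) * (K^2 * real m powr (2 * (\<epsilon> - 1)))"
      by (rule mult_left_mono) simp
    also have "\<dots> = K^2 * real m powr e" using that by (simp add: e_def powr_add)
    finally show ?thesis by simp
  qed
  show ?thesis by (rule summable_comparison_test[OF _ majorant]) (intro exI[of _ 1] allI impI bound)
qed

(* For s >= 1/2 the weights dominate the divergent first moment. *)
lemma blaschke_coeff_weighted_not_summable:
  fixes s :: real
  assumes "1/2 \<le> s"
  shows "\<not> summable (\<lambda>m. real m powr (2 * s) * (norm (blaschke_coeff m))^2)"
proof
  assume majorant: "summable (\<lambda>m. real m powr (2 * s) * (norm (blaschke_coeff m))^2)"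
  have bound: "norm (real m * (norm (blaschke_coeff m))^2) \<le> real m powr (2 * s) * (norm (blaschke_coeff m))^2"
    if "1 \<le> m" for m
  proof -
    have "real m = real m powr 1" using that by simp
    also have "\<dots> \<le> real m powr (2 * s)" using assms that by (intro powr_mono) auto
    finally show ?thesis by (simp add: mult_right_mono)
  qed
  have "summable (\<lambda>m. real m * (norm (blaschke_coeff m))^2)"
    by (rule summable_comparison_test[OF _ majorant]) (intro exI[of _ 1] allI impI bound)
  then show False using blaschke_coeff_not_summable by contradiction
qed

theorem mainTheorem7:
  shows "\<exists>f :: complex \<Rightarrow> complex.
           f \<in> borel_measurable (restrict_space borel circle) \<and>
           f ` circle \<subseteq> circle \<and>
           (\<forall>n::int. n \<ge> 0 \<longrightarrow> fourier_coeff f n = 0) \<and>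
           (\<forall>s'::real. s' < 1/2 \<longrightarrow>
              (\<lambda>n::int. real_of_int \<bar>n\<bar> powr (2 * s') * (cmod (fourier_coeff f n))\<^sup>2) summable_on UNIV) \<and>
           (\<forall>s::real. s \<ge> 1/2 \<longrightarrow>
              \<not> ((\<lambda>n::int. real_of_int \<bar>n\<bar> powr (2 * s) * (cmod (fourier_coeff f n))\<^sup>2) summable_on UNIV))"
proof (intro exI conjI allI impI)
  let ?f = "\<lambda>z. cnj (blaschke_limit z)"
  show "?f \<in> borel_measurable (restrict_space borel circle)" by (rule cnj_blaschke_limit_measurable)
  show "?f ` circle \<subseteq> circle" by (auto simp: norm_blaschke_limit)
  show "fourier_coeff ?f n = 0" if "0 \<le> n" for n
    using that by (cases "n = 0") (simp_all add: fourier_coeff_cnj_blaschke_limit)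
  show "(\<lambda>n::int. real_of_int \<bar>n\<bar> powr (2 * s') * (cmod (fourier_coeff ?f n))\<^sup>2) summable_on UNIV"
    if "s' < 1/2" for s'
    unfolding summable_on_fourier_weights_iff using that by (rule blaschke_coeff_weighted_summable)
  show "\<not> (\<lambda>n::int. real_of_int \<bar>n\<bar> powr (2 * s) * (cmod (fourier_coeff ?f n))\<^sup>2) summable_on UNIV"
    if "1/2 \<le> s" for s
    unfolding summable_on_fourier_weights_iff using that by (rule blaschke_coeff_weighted_not_summable)
qed

end
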